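(* Let $q$ be a prime power, $n\ge1$, and $k$ an integer with $(n-1)(q-1)<k<n(q-1)-\frac{q-1}{2}$. Put $\ell=n(q-1)-k$. Then \[\dim(\operatorname{Hull}(C_{n,k}^q))=\dim(C_{n,\ell}^q)-(2\ell+1-(q-1))=\binom{n+\ell}{\ell}-(2\ell+1-(q-1)).\]
   Context: For a prime power $q$ and integers $n\ge 1$, $k\ge 0$, the projective Reed-Muller code $C_{n,k}^q\subseteq \mathbb{F}_q^N$, $N=\frac{q^{n+1}-1}{q-1}$, is defined as follows. For each point of $\mathbb{P}^n(\mathbb{F}_q)$ choose the affine representative $(p_0,\dots,p_n)\in\mathbb{F}_q^{n+1}\setminus\{0\}$ whose left-most nonzero coordinate equals $1$, and fix an ordering $P_1',\dots,P_N'$ of these representatives. Then $C_{n,k}^q=\{(F(P_1'),\dots,F(P_N')) : F\in \mathbb{F}_q[x_0,\dots,x_n]_k\}$, where $\mathbb{F}_q[x_0,\dots,x_n]_k$ is the space of homogeneous polynomials of degree $k$ together with $0$. Duals are with respect to the standard dot product, and $\operatorname{Hull}(C)=C\cap C^\perp$. *)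

theory Defs
  imports Complex_Main "HOL-Library.Function_Algebras"
begin

definition proj_points :: "nat \<Rightarrow> ('a::field) list set" where
  "proj_points n = {p. length p = n + 1 \<and>
      (\<exists>i < n + 1. p ! i = 1 \<and> (\<forall>j < i. p ! j = 0))}"

definition monomials :: "nat \<Rightarrow> nat \<Rightarrow> (nat \<Rightarrow> nat) set" where
  "monomials n k = {e. (\<forall>i > n. e i = 0) \<and> (\<Sum>i\<le>n. e i) = k}"

definition mon_eval :: "(nat \<Rightarrow> nat) \<Rightarrow> nat \<Rightarrow> ('a::field) list \<Rightarrow> 'a" where
  "mon_eval e n p = (\<Prod>i\<le>n. (p ! i) ^ e i)"

text \<open>Codewords are functions on the point set (zero outside it); a homogeneous
polynomial of degree k is given by its coefficient function c on the monomials.\<close>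
definition PRM :: "nat \<Rightarrow> nat \<Rightarrow> (('a::{field,finite}) list \<Rightarrow> 'a) set" where
  "PRM n k = {v. \<exists>c :: (nat \<Rightarrow> nat) \<Rightarrow> 'a. \<forall>p.
      v p = (if p \<in> proj_points n then (\<Sum>e\<in>monomials n k. c e * mon_eval e n p) else 0)}"

definition dual_code :: "nat \<Rightarrow> (('a::field) list \<Rightarrow> 'a) set \<Rightarrow> ('a list \<Rightarrow> 'a) set" where
  "dual_code n C = {v. (\<forall>p. p \<notin> proj_points n \<longrightarrow> v p = 0) \<and>
      (\<forall>c\<in>C. (\<Sum>p\<in>proj_points n. v p * c p) = 0)}"

definition hull_code :: "nat \<Rightarrow> (('a::field) list \<Rightarrow> 'a) set \<Rightarrow> ('a list \<Rightarrow> 'a) set" where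
  "hull_code n C = C \<inter> dual_code n C"

definition fscale :: "'a::field \<Rightarrow> ('b \<Rightarrow> 'a) \<Rightarrow> ('b \<Rightarrow> 'a)" where
  "fscale c f = (\<lambda>x. c * f x)"

definition code_dim :: "(('a::field) list \<Rightarrow> 'a) set \<Rightarrow> nat" where
  "code_dim C = vector_space.dim fscale C"

end

theory Submission
  imports Defs "HOL-Library.Multiset" "HOL-Computational_Algebra.Polynomial"
begin

text \<open>Write \<open>m = q - 1\<close> and regard codewords as functions on \<open>\<bbbP>\<^sup>n\<close>. Summing a monomial
  over \<open>\<bbbP>\<^sup>n\<close> reduces to power sums \<open>\<Sum>\<^sub>t t\<^sup>c\<close> over \<open>\<bbbF>\<^sub>q\<close>, which vanish unless \<open>c\<close> is a
  positive multiple of \<open>m\<close>. Hence codes of degrees \<open>k + \<ell> = nm\<close> are orthogonal, and a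
  triangularity argument with complementary monomials, in the basis of reduced monomials of a
  fixed degree modulo \<open>m\<close>, shows \<open>C\<^sub>k\<^sup>\<bottom> \<subseteq> C\<^sub>\<ell>\<close> and \<open>C\<^sub>\<ell>\<^sup>\<bottom> \<subseteq> C\<^sub>k\<close>. So the hull is the
  radical of the pairing on \<open>C\<^sub>\<ell>\<close>. As \<open>m < 2\<ell> < 2m\<close>, a degree-\<open>2\<ell>\<close> monomial has nonzero
  sum over \<open>\<bbbP>\<^sup>n\<close> only if it is \<open>x\<^sub>n\<^sup>2\<^sup>\<ell>\<close> or \<open>x\<^sub>n\<^sub>-\<^sub>1\<^sup>2\<^sup>\<ell>\<^sup>-\<^sup>m x\<^sub>n\<^sup>m\<close>. Thus only the
  \<open>2\<ell> - m + 1\<close> monomials \<open>x\<^sub>n\<^sub>-\<^sub>1\<^sup>t x\<^sub>n\<^sup>\<ell>\<^sup>-\<^sup>t\<close> with \<open>t \<le> 2\<ell> - m\<close> pair nontrivially with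
  \<open>C\<^sub>\<ell>\<close>, their Gram matrix is nonsingular, and the other degree-\<open>\<ell>\<close> monomials form a basis
  of the hull.\<close>

section \<open>Power sums over a finite field\<close>

lemma card_UNIV_field_ge_2: "card (UNIV::'a::{field,finite} set) \<ge> 2"
proof -
  have "card {0::'a, 1} \<le> card (UNIV::'a set)" by (intro card_mono) auto
  thus ?thesis by simp
qed

lemma fermat_finite_field:
  fixes x :: "'a::{field,finite}"
  assumes "x \<noteq> 0"
  shows "x ^ (card (UNIV::'a set) - 1) = 1"
proof -
  let ?U = "UNIV - {0::'a}"
  have bij: "bij_betw (\<lambda>y. x * y) ?U ?U"
    by (rule bij_betw_byWitness[where f'="\<lambda>y. y / x"]) (use assms in auto)
  have "prod id ?U = prod (\<lambda>y. x * y) ?U"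
    using prod.reindex_bij_betw[OF bij, of id] by simp
  also have "\<dots> = x ^ card ?U * prod id ?U" by (simp add: prod.distrib)
  finally have "(x ^ card ?U - 1) * prod id ?U = 0" by (simp add: algebra_simps)
  moreover have "prod id ?U \<noteq> 0" by (simp add: prod_zero_iff)
  ultimately show ?thesis by (simp add: card_Diff_singleton)
qed

lemma of_nat_card_UNIV_field: "(of_nat (card (UNIV::'a::{field,finite} set)) :: 'a) = 0"
proof -
  have bij: "bij_betw (\<lambda>t::'a. t + 1) UNIV UNIV"
    by (rule bij_betw_byWitness[where f'="\<lambda>t. t - 1"]) auto
  have "(\<Sum>t\<in>(UNIV::'a set). t + 1) = (\<Sum>t\<in>UNIV. t)"
    using sum.reindex_bij_betw[OF bij, of id] by simp
  thus ?thesis by (simp add: sum.distrib)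
qed

lemma power_mod_card_minus_one:
  fixes x :: "'a::{field,finite}"
  assumes "x \<noteq> 0"
  shows "x ^ c = x ^ (c mod (card (UNIV::'a set) - 1))"
proof -
  let ?m = "card (UNIV::'a set) - 1"
  have "x ^ c = (x ^ ?m) ^ (c div ?m) * x ^ (c mod ?m)"
    by (metis div_mult_mod_eq mult.commute power_add power_mult)
  thus ?thesis using fermat_finite_field[OF assms] by simp
qed

lemma exists_power_ne_one:
  assumes "0 < r" "r < card (UNIV::'a::{field,finite} set) - 1"
  shows "\<exists>x::'a. x \<noteq> 0 \<and> x ^ r \<noteq> 1"
proof (rule ccontr)
  assume "\<not> ?thesis"
  hence roots: "\<And>x::'a. x \<noteq> 0 \<Longrightarrow> x ^ r = 1" by blast
  define p :: "'a poly" where "p = monom 1 r - [:1:]"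
  have "coeff p r = 1" using assms by (cases r) (auto simp: p_def)
  hence p0: "p \<noteq> 0" by auto
  have "degree p \<le> r" unfolding p_def
    by (rule degree_diff_le) (auto simp: degree_monom_le)
  have "UNIV - {0::'a} \<subseteq> {x. poly p x = 0}"
    using roots by (auto simp: p_def poly_monom)
  hence "card (UNIV - {0::'a}) \<le> card {x. poly p x = 0}"
    by (intro card_mono) auto
  also have "\<dots> \<le> degree p" by (rule card_poly_roots_bound[OF p0])
  finally show False using \<open>degree p \<le> r\<close> assms by (simp add: card_Diff_singleton)
qed

lemma coeff_eq_0_if_poly_vanishes:
  fixes g :: "nat \<Rightarrow> 'a::{field,finite}"
  assumes "\<And>x::'a. (\<Sum>j<card (UNIV::'a set). g j * x ^ j) = 0" "j < card (UNIV::'a set)"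
  shows "g j = 0"
proof -
  let ?q = "card (UNIV::'a set)"
  define p where "p = (\<Sum>j<?q. monom (g j) j)"
  have "{x. poly p x = 0} = UNIV" using assms(1) by (simp add: p_def poly_sum poly_monom)
  moreover have "degree p \<le> ?q - 1" unfolding p_def
    by (rule degree_sum_le) (auto intro: order.trans[OF degree_monom_le])
  ultimately have "p = 0"
    using card_poly_roots_bound[of p] card_UNIV_field_ge_2[where 'a='a] by fastforce
  hence "coeff p j = 0" by simp
  thus ?thesis using assms(2) by (simp add: p_def coeff_sum)
qed

definition power_sum :: "nat \<Rightarrow> 'a::{field,finite}" where
  "power_sum c = (\<Sum>t\<in>UNIV. t ^ c)"

lemma power_sum_0: "(power_sum 0 :: 'a::{field,finite}) = 0"
  using of_nat_card_UNIV_field by (simp add: power_sum_def)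

lemma power_sum_multiple:
  assumes "c > 0" "(card (UNIV::'a::{field,finite} set) - 1) dvd c"
  shows "(power_sum c :: 'a) = -1"
proof -
  have "t ^ c = (if t = 0 then 0 else 1)" for t :: 'a
    using assms power_mod_card_minus_one[of t c] by auto
  hence "(power_sum c :: 'a) = (\<Sum>t\<in>UNIV - {0::'a}. 1)"
    by (simp add: power_sum_def sum.If_cases Diff_eq Int_commute)
  also have "\<dots> = of_nat (card (UNIV::'a set)) - 1"
    using card_UNIV_field_ge_2[where 'a='a] by (simp add: card_Diff_singleton of_nat_diff)
  finally show ?thesis using of_nat_card_UNIV_field[where 'a='a] by simp
qed

lemma power_sum_not_multiple:
  assumes "\<not> (card (UNIV::'a::{field,finite} set) - 1) dvd c"
  shows "(power_sum c :: 'a) = 0"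
proof -
  let ?m = "card (UNIV::'a set) - 1"
  have "0 < c mod ?m" "c mod ?m < ?m"
    using assms card_UNIV_field_ge_2[where 'a='a] by (simp_all add: dvd_eq_mod_eq_0)
  then obtain x :: 'a where x: "x \<noteq> 0" "x ^ (c mod ?m) \<noteq> 1"
    using exists_power_ne_one by blast
  have bij: "bij_betw (\<lambda>t::'a. x * t) UNIV UNIV"
    by (rule bij_betw_byWitness[where f'="\<lambda>t. t / x"]) (use x in auto)
  \<comment> \<open>Substituting \<open>t \<mapsto> x t\<close> multiplies the sum by \<open>x ^ c \<noteq> 1\<close>.\<close>
  have "power_sum c = (\<Sum>t\<in>(UNIV::'a set). (x * t) ^ c)"
    unfolding power_sum_def using sum.reindex_bij_betw[OF bij, of "\<lambda>t. t ^ c"] by simp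
  also have "\<dots> = x ^ c * power_sum c"
    by (simp add: power_sum_def power_mult_distrib sum_distrib_left)
  finally have "(1 - x ^ c) * power_sum c = 0" by (simp add: algebra_simps)
  thus ?thesis using x power_mod_card_minus_one[OF x(1)] by simp
qed

lemma power_sum_nonzero_iff:
  "(power_sum c :: 'a::{field,finite}) \<noteq> 0 \<longleftrightarrow> c > 0 \<and> (card (UNIV::'a set) - 1) dvd c"
  using power_sum_0 power_sum_multiple power_sum_not_multiple
  by (metis gr0I neg_0_equal_iff_equal zero_neq_one)

lemma prod_power_sum_nonzero:
  fixes n :: nat
  assumes "(\<Prod>i\<le>n. (power_sum (c i) :: 'a::{field,finite})) \<noteq> 0" "i \<le> n"
  shows "c i > 0 \<and> (card (UNIV::'a set) - 1) dvd c i"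
proof -
  have "power_sum (c i) \<noteq> (0::'a)"
  proof
    assume "power_sum (c i) = (0::'a)"
    hence "(\<Prod>i\<le>n. (power_sum (c i) :: 'a)) = 0" using assms(2) by (intro prod_zero) auto
    thus False using assms(1) by simp
  qed
  thus ?thesis using power_sum_nonzero_iff by blast
qed

section \<open>Monomial sums over affine and projective points\<close>

definition affine_points :: "nat \<Rightarrow> 'a list set" where
  "affine_points r = {xs. length xs = r}"

definition total_degree :: "nat \<Rightarrow> (nat \<Rightarrow> nat) \<Rightarrow> nat" where
  "total_degree n e = (\<Sum>i\<le>n. e i)"

lemma finite_affine_points [simp]: "finite (affine_points r :: ('a::finite) list set)"
  unfolding affine_points_def using finite_lists_length_eq[of "UNIV::'a set" r] by simp

lemma card_affine_points: "card (affine_points r :: ('a::finite) list set) = card (UNIV::'a set) ^ r"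
  unfolding affine_points_def using card_lists_length_eq[of "UNIV::'a set" r] by simp

lemma affine_points_0: "affine_points 0 = {[]}"
  unfolding affine_points_def by auto

lemma affine_points_Suc: "affine_points (Suc r) = (\<lambda>(x, ys). x # ys) ` (UNIV \<times> affine_points r)"
  unfolding affine_points_def by (auto simp: length_Suc_conv)

lemma sum_affine_points_Suc:
  "(\<Sum>y\<in>affine_points (Suc r). f y) = (\<Sum>x\<in>(UNIV::'a::finite set). \<Sum>ys\<in>affine_points r. f (x # ys))"
proof -
  have inj: "inj_on (\<lambda>(x, ys). x # ys) (UNIV \<times> (affine_points r :: 'a list set))"
    by (auto simp: inj_on_def)
  have "(\<Sum>y\<in>affine_points (Suc r). f y) = (\<Sum>z\<in>UNIV \<times> (affine_points r :: 'a list set). f (fst z # snd z))"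
    unfolding affine_points_Suc by (subst sum.reindex[OF inj]) (simp add: case_prod_beta)
  also have "\<dots> = (\<Sum>x\<in>(UNIV::'a set). \<Sum>ys\<in>affine_points r. f (x # ys))"
    by (subst sum.cartesian_product) (simp add: case_prod_beta)
  finally show ?thesis .
qed

lemma total_degree_0: "total_degree 0 c = c 0"
  by (simp add: total_degree_def)

lemma total_degree_Suc: "total_degree (Suc n) c = c 0 + total_degree n (\<lambda>i. c (Suc i))"
  unfolding total_degree_def sum.atMost_Suc_shift by simp

lemma total_degree_add: "total_degree n (\<lambda>i. a i + b i) = total_degree n a + total_degree n b"
  by (simp add: total_degree_def sum.distrib)

lemma total_degree_eq_0_iff: "total_degree n c = 0 \<longleftrightarrow> (\<forall>i\<le>n. c i = 0)"
  by (auto simp: total_degree_def)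

lemma mon_eval_0: "mon_eval e 0 [x] = x ^ e 0"
  unfolding mon_eval_def by simp

lemma mon_eval_Cons: "mon_eval e (Suc n) (x # xs) = x ^ e 0 * mon_eval (\<lambda>i. e (Suc i)) n xs"
  unfolding mon_eval_def prod.atMost_Suc_shift by simp

lemma sum_affine_points_mon_eval:
  "(\<Sum>y\<in>affine_points (Suc n). mon_eval e n y) = (\<Prod>i\<le>n. (power_sum (e i) :: 'a::{field,finite}))"
proof (induction n arbitrary: e)
  case 0
  show ?case by (simp add: sum_affine_points_Suc affine_points_0 mon_eval_0 power_sum_def)
next
  case (Suc n)
  have "(\<Sum>y\<in>affine_points (Suc (Suc n)). mon_eval e (Suc n) y)
      = (\<Sum>x\<in>(UNIV::'a set). x ^ e 0) * (\<Sum>ys\<in>affine_points (Suc n). mon_eval (\<lambda>i. e (Suc i)) n ys)"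
    unfolding sum_affine_points_Suc[where r="Suc n"] mon_eval_Cons sum_product ..
  also have "\<dots> = (\<Prod>i\<le>Suc n. power_sum (e i))"
    using Suc.IH unfolding prod.atMost_Suc_shift by (simp add: power_sum_def)
  finally show ?case .
qed

lemma length_proj_points: "p \<in> proj_points n \<Longrightarrow> length p = Suc n"
  unfolding proj_points_def by auto

lemma finite_proj_points [simp]: "finite (proj_points n :: ('a::{field,finite}) list set)"
  unfolding proj_points_def
  by (rule finite_subset[OF _ finite_lists_length_eq[of UNIV "n + 1"]]) auto

lemma proj_points_0: "proj_points 0 = {[1]}"
  unfolding proj_points_def by (auto simp: length_Suc_conv)

lemma proj_points_Suc:
  "proj_points (Suc n) = Cons 0 ` proj_points n \<union> Cons 1 ` affine_points (Suc n)"
proof (intro set_eqI iffI)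
  fix p :: "'a list"
  assume "p \<in> proj_points (Suc n)"
  then obtain i where i: "i < Suc (Suc n)" "p ! i = 1" "\<forall>j<i. p ! j = 0"
    and "length p = Suc (Suc n)"
    unfolding proj_points_def by auto
  then obtain x xs where p: "p = x # xs" and lxs: "length xs = Suc n"
    by (auto simp: length_Suc_conv)
  show "p \<in> Cons 0 ` proj_points n \<union> Cons 1 ` affine_points (Suc n)"
  proof (cases i)
    case 0
    thus ?thesis using i p lxs by (auto simp: affine_points_def)
  next
    case (Suc i')
    have "xs \<in> proj_points n"
      unfolding proj_points_def
    proof (intro CollectI conjI exI)
      show "length xs = n + 1" "i' < n + 1" "xs ! i' = 1"
        using lxs i p Suc by simp_all
      show "\<forall>j<i'. xs ! j = 0"
        using i(3) p Suc by (metis Suc_mono nth_Cons_Suc)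
    qed
    moreover have "x = 0" using i(3) p Suc by auto
    ultimately show ?thesis using p by blast
  qed
next
  fix p :: "'a list"
  assume "p \<in> Cons 0 ` proj_points n \<union> Cons 1 ` affine_points (Suc n)"
  thus "p \<in> proj_points (Suc n)"
  proof
    assume "p \<in> Cons 0 ` proj_points n"
    then obtain xs i where p: "p = 0 # xs" and "length xs = n + 1" and i: "i < n + 1"
        "xs ! i = 1" "\<forall>j<i. xs ! j = 0"
      unfolding proj_points_def by blast
    thus ?thesis unfolding proj_points_def
      by (intro CollectI conjI exI[of _ "Suc i"]) (auto simp: less_Suc_eq_0_disj)
  next
    assume "p \<in> Cons 1 ` affine_points (Suc n)"
    thus ?thesis unfolding proj_points_def affine_points_def
      by (intro CollectI conjI exI[of _ 0]) auto
  qed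
qed

lemma proj_points_Suc_disjoint: "Cons 0 ` proj_points n \<inter> Cons (1::'a::field) ` affine_points (Suc n) = {}"
  by auto

lemma card_proj_points_Suc:
  "card (proj_points (Suc n) :: ('a::{field,finite}) list set)
     = card (proj_points n :: 'a list set) + card (UNIV::'a set) ^ Suc n"
  unfolding proj_points_Suc
  by (subst card_Un_disjoint) (auto simp: proj_points_Suc_disjoint card_image card_affine_points)

lemma sum_proj_points_Suc:
  "(\<Sum>p\<in>proj_points (Suc n). f p) =
     (\<Sum>p\<in>proj_points n. f (0 # p)) + (\<Sum>y\<in>affine_points (Suc n). f ((1::'a::{field,finite}) # y))"
  unfolding proj_points_Suc
  by (subst sum.union_disjoint) (auto simp: proj_points_Suc_disjoint sum.reindex)

definition proj_mon_sum :: "nat \<Rightarrow> (nat \<Rightarrow> nat) \<Rightarrow> 'a::{field,finite}" where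
  "proj_mon_sum n c = (\<Sum>p\<in>proj_points n. mon_eval c n p)"

lemma proj_mon_sum_0: "proj_mon_sum 0 c = 1"
  by (simp add: proj_mon_sum_def proj_points_0 mon_eval_0)

lemma proj_mon_sum_Suc:
  "(proj_mon_sum (Suc n) c :: 'a::{field,finite})
     = 0 ^ c 0 * proj_mon_sum n (\<lambda>i. c (Suc i)) + (\<Prod>i\<le>n. power_sum (c (Suc i)))"
  unfolding proj_mon_sum_def sum_proj_points_Suc mon_eval_Cons
  by (simp add: sum_distrib_left[symmetric] sum_affine_points_mon_eval)

lemma proj_mon_sum_degree_multiple:
  assumes "(card (UNIV::'a::{field,finite} set) - 1) dvd total_degree n c" "total_degree n c > 0"
  shows "(proj_mon_sum n c :: 'a) = - (\<Prod>i\<le>n. power_sum (c i))"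
  using assms
proof (induction n arbitrary: c)
  case 0
  thus ?case using power_sum_multiple[where 'a='a] by (simp add: proj_mon_sum_0 total_degree_0)
next
  case (Suc n)
  let ?m = "card (UNIV::'a set) - 1" and ?d = "\<lambda>i. c (Suc i)"
  show ?case
  proof (cases "c 0 = 0")
    case True
    hence "?m dvd total_degree n ?d" "total_degree n ?d > 0"
      using Suc.prems by (simp_all add: total_degree_Suc)
    from Suc.IH[OF this] show ?thesis
      using True unfolding prod.atMost_Suc_shift by (simp add: proj_mon_sum_Suc power_sum_0)
  next
    case False
    hence sum: "proj_mon_sum (Suc n) c = (\<Prod>i\<le>n. (power_sum (?d i) :: 'a))"
      by (simp add: proj_mon_sum_Suc)
    show ?thesis
    proof (cases "(\<Prod>i\<le>n. (power_sum (?d i) :: 'a)) = 0")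
      case True
      thus ?thesis using sum unfolding prod.atMost_Suc_shift by (metis mult_zero_right neg_0_equal_iff_equal)
    next
      case nonzero: False
      \<comment> \<open>Then all tail exponents are multiples of \<open>q - 1\<close>, hence so is the head one.\<close>
      have "?m dvd total_degree n ?d"
        unfolding total_degree_def using prod_power_sum_nonzero[OF nonzero] by (auto intro: dvd_sum)
      hence "?m dvd c 0" using Suc.prems(1) by (simp add: total_degree_Suc dvd_add_left_iff)
      hence "power_sum (c 0) = (-1::'a)" using power_sum_multiple False by auto
      thus ?thesis using sum unfolding prod.atMost_Suc_shift by simp
    qed
  qed
qed

lemma prod_power_sum_small_degree:
  fixes n :: nat
  assumes "total_degree n d < 2 * (card (UNIV::'a::{field,finite} set) - 1)"
  shows "(\<Prod>i\<le>n. (power_sum (d i) :: 'a))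
           = (if n = 0 \<and> d 0 = card (UNIV::'a set) - 1 then -1 else 0)"
proof -
  let ?m = "card (UNIV::'a set) - 1"
  have m_pos: "0 < ?m" using card_UNIV_field_ge_2[where 'a='a] by simp
  show ?thesis
  proof (cases "n = 0 \<and> d 0 = ?m")
    case True
    thus ?thesis using power_sum_multiple[where 'a='a, of ?m] m_pos by simp
  next
    case False
    have "(\<Prod>i\<le>n. (power_sum (d i) :: 'a)) = 0"
    proof (rule ccontr)
      assume nonzero: "(\<Prod>i\<le>n. (power_sum (d i) :: 'a)) \<noteq> 0"
      have "?m \<le> d i" if "i \<le> n" for i
        using prod_power_sum_nonzero[OF nonzero that] by (auto intro: dvd_imp_le)
      hence "Suc n * ?m \<le> total_degree n d"
        unfolding total_degree_def using sum_mono[of "{..n}" "\<lambda>_. ?m" d] by simp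
      hence "n = 0" using assms by (cases n) auto
      moreover obtain r where "d 0 = ?m * r" "r > 0"
        using prod_power_sum_nonzero[OF nonzero, of 0] by (auto elim: dvdE)
      ultimately show False using assms False by (cases r; cases "r - 1") (auto simp: total_degree_0)
    qed
    thus ?thesis by (simp only: False if_False)
  qed
qed

text \<open>\<open>tail_exps n a b\<close> is the exponent vector of \<open>x\<^sub>n\<^sub>-\<^sub>1\<^sup>a x\<^sub>n\<^sup>b\<close>; for \<open>n = 0\<close> it is that of \<open>x\<^sub>0\<^sup>b\<close>.\<close>

definition tail_exps :: "nat \<Rightarrow> nat \<Rightarrow> nat \<Rightarrow> nat \<Rightarrow> nat" where
  "tail_exps n a b = (\<lambda>i. if i = n then b else if Suc i = n then a else 0)"

lemma tail_exps_Suc: "(\<lambda>i. tail_exps (Suc n) a b (Suc i)) = tail_exps n a b"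
  by (auto simp: tail_exps_def)

lemma tail_exps_Suc_0: "tail_exps (Suc n) a b 0 = (if n = 0 then a else 0)"
  by (simp add: tail_exps_def)

lemma fun_eq_iff_head_tail: "c = f \<longleftrightarrow> c 0 = f 0 \<and> (\<lambda>i. c (Suc i)) = (\<lambda>i. f (Suc i))"
  by (metis fun_eq_iff not0_implies_Suc)

lemma tail_exps_at:
  "tail_exps n a b n = b" "Suc j = n \<Longrightarrow> tail_exps n a b j = a"
  "i \<noteq> n \<Longrightarrow> Suc i \<noteq> n \<Longrightarrow> tail_exps n a b i = 0"
  by (auto simp: tail_exps_def)

lemma total_degree_tail_exps:
  assumes "Suc j = n"
  shows "total_degree n (tail_exps n a b) = a + b"
proof -
  have "total_degree n (tail_exps n a b) = (\<Sum>i\<in>{j, n}. tail_exps n a b i)"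
    unfolding total_degree_def using assms
    by (intro sum.mono_neutral_right) (auto simp: tail_exps_at)
  thus ?thesis using assms by (auto simp: tail_exps_at)
qed

lemma eq_tail_expsI:
  assumes "Suc j = n" "f j = a" "f n = b" "\<And>i. i \<noteq> j \<Longrightarrow> i \<noteq> n \<Longrightarrow> f i = 0"
  shows "f = tail_exps n a b"
proof
  fix i show "f i = tail_exps n a b i"
    using assms by (cases "i = j"; cases "i = n") (auto simp: tail_exps_at)
qed

lemma eq_tail_exps_iff:
  assumes "Suc j = n" "\<And>i. i \<noteq> j \<Longrightarrow> i \<noteq> n \<Longrightarrow> f i = 0"
  shows "f = tail_exps n a b \<longleftrightarrow> f j = a \<and> f n = b"
proof
  assume "f = tail_exps n a b"
  thus "f j = a \<and> f n = b" using assms(1) by (simp add: tail_exps_at)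
next
  assume "f j = a \<and> f n = b"
  thus "f = tail_exps n a b" by (intro eq_tail_expsI[OF assms(1)]) (use assms(2) in auto)
qed

lemma add_eq_tail_exps_iff:
  assumes "Suc j = n"
  shows "(\<lambda>i. a i + tail_exps n s t i) = tail_exps n x y
           \<longleftrightarrow> s \<le> x \<and> t \<le> y \<and> a = tail_exps n (x - s) (y - t)"
proof
  assume sum: "(\<lambda>i. a i + tail_exps n s t i) = tail_exps n x y"
  have at: "a i + tail_exps n s t i = tail_exps n x y i" for i using fun_cong[OF sum] by simp
  have "a j + s = x" "a n + t = y" using at[of j] at[of n] assms by (simp_all add: tail_exps_at)
  moreover have "a i = 0" if "i \<noteq> j" "i \<noteq> n" for i
    using at[of i] that assms by (auto simp: tail_exps_at)
  ultimately show "s \<le> x \<and> t \<le> y \<and> a = tail_exps n (x - s) (y - t)"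
    using assms by (auto intro: eq_tail_expsI)
next
  assume "s \<le> x \<and> t \<le> y \<and> a = tail_exps n (x - s) (y - t)"
  thus "(\<lambda>i. a i + tail_exps n s t i) = tail_exps n x y"
    by (auto simp: fun_eq_iff tail_exps_def)
qed

lemma proj_mon_sum_degree_between:
  fixes c :: "nat \<Rightarrow> nat"
  assumes m: "m = card (UNIV::'a::{field,finite} set) - 1"
    and s: "m < s" "s < 2 * m"
    and supp: "\<forall>i>n. c i = 0" and deg: "total_degree n c = s"
  shows "(proj_mon_sum n c :: 'a)
           = (if c = tail_exps n 0 s then 1 else 0) - (if c = tail_exps n (s - m) m then 1 else 0)"
  using supp deg
proof (induction n arbitrary: c)
  case 0
  hence "c = tail_exps 0 0 s" by (auto simp: fun_eq_iff tail_exps_def total_degree_0)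
  moreover have "tail_exps 0 0 s \<noteq> tail_exps 0 (s - m) m"
    using s by (auto simp: fun_eq_iff tail_exps_def)
  ultimately show ?case by (simp add: proj_mon_sum_0)
next
  case (Suc n)
  let ?d = "\<lambda>i. c (Suc i)"
  have supp': "\<forall>i>n. ?d i = 0" using Suc.prems(1) by auto
  have deg': "total_degree n ?d = s - c 0" using Suc.prems(2) by (simp add: total_degree_Suc)
  have "total_degree n ?d < 2 * (card (UNIV::'a set) - 1)" using deg' s m by simp
  hence tail: "(\<Prod>i\<le>n. power_sum (?d i) :: 'a) = (if n = 0 \<and> c (Suc 0) = m then -1 else 0)"
    unfolding m by (rule prod_power_sum_small_degree)
  show ?case
  proof (cases "n = 0")
    case True
    have "\<And>i. i \<noteq> 0 \<Longrightarrow> i \<noteq> Suc 0 \<Longrightarrow> c i = 0" using Suc.prems(1) True by auto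
    hence iff: "c = tail_exps (Suc 0) x y \<longleftrightarrow> c 0 = x \<and> c (Suc 0) = y" for x y
      by (rule eq_tail_exps_iff[OF refl])
    have c01: "c 0 + c (Suc 0) = s" using Suc.prems(2) True by (simp add: total_degree_Suc total_degree_0)
    have "(power_sum (c (Suc 0)) :: 'a) = (if c (Suc 0) = m then -1 else 0)"
      using tail True by simp
    hence "(proj_mon_sum (Suc n) c :: 'a) = (if c 0 = 0 then 1 else 0) + (if c (Suc 0) = m then -1 else 0)"
      using True by (simp add: proj_mon_sum_Suc proj_mon_sum_0 power_0_left)
    moreover have "c = tail_exps (Suc n) 0 s \<longleftrightarrow> c 0 = 0" using iff True c01 by auto
    moreover have "c = tail_exps (Suc n) (s - m) m \<longleftrightarrow> c (Suc 0) = m" using iff True c01 by auto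
    ultimately show ?thesis by simp
  next
    case False
    have iff: "c = tail_exps (Suc n) x y \<longleftrightarrow> c 0 = 0 \<and> ?d = tail_exps n x y" for x y
      using False by (subst fun_eq_iff_head_tail) (simp add: tail_exps_Suc tail_exps_Suc_0)
    show ?thesis
      using Suc.IH[OF supp'] deg' False
      by (cases "c 0 = 0") (simp_all add: proj_mon_sum_Suc iff tail power_0_left)
  qed
qed

section \<open>Linear independence of reduced monomials on projective space\<close>

definition aff_mon_eval :: "nat \<Rightarrow> (nat \<Rightarrow> nat) \<Rightarrow> 'a::field list \<Rightarrow> 'a" where
  "aff_mon_eval r b y = (\<Prod>i<r. y ! i ^ b i)"

lemma aff_mon_eval_Cons: "aff_mon_eval (Suc r) b (x # y) = x ^ b 0 * aff_mon_eval r (\<lambda>i. b (Suc i)) y"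
  unfolding aff_mon_eval_def prod.lessThan_Suc_shift by simp

lemma mon_eval_eq_aff_mon_eval: "mon_eval b n y = aff_mon_eval (Suc n) b y"
  unfolding mon_eval_def aff_mon_eval_def by (simp add: lessThan_Suc_atMost)

lemma case_nat_head_tail: "b 0 = j \<Longrightarrow> case_nat j (\<lambda>i. b (Suc i)) = b"
  by (auto simp: fun_eq_iff split: nat.split)

lemma sum_aff_mon_eval_Cons_by_head:
  fixes cf :: "(nat \<Rightarrow> nat) \<Rightarrow> 'a::field"
  assumes "finite S" "\<forall>b\<in>S. b 0 < q"
  shows "(\<Sum>b\<in>S. cf b * aff_mon_eval (Suc r) b (x # y))
           = (\<Sum>j<q. (\<Sum>b\<in>{b\<in>S. b 0 = j}. cf b * aff_mon_eval r (\<lambda>i. b (Suc i)) y) * x ^ j)"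
proof -
  have "(\<Sum>b\<in>S. cf b * aff_mon_eval (Suc r) b (x # y))
      = (\<Sum>j<q. \<Sum>b\<in>{b\<in>S. b 0 = j}. cf b * aff_mon_eval (Suc r) b (x # y))"
    by (rule sum.group[symmetric]) (use assms in auto)
  also have "\<dots> = (\<Sum>j<q. (\<Sum>b\<in>{b\<in>S. b 0 = j}. cf b * aff_mon_eval r (\<lambda>i. b (Suc i)) y) * x ^ j)"
  proof (intro sum.cong refl)
    fix j
    show "(\<Sum>b\<in>{b\<in>S. b 0 = j}. cf b * aff_mon_eval (Suc r) b (x # y))
        = (\<Sum>b\<in>{b\<in>S. b 0 = j}. cf b * aff_mon_eval r (\<lambda>i. b (Suc i)) y) * x ^ j"
      unfolding sum_distrib_right by (intro sum.cong refl) (simp add: aff_mon_eval_Cons mult_ac)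
  qed
  finally show ?thesis .
qed

text \<open>Monomials with all exponents below \<open>q\<close> are independent as functions on \<open>\<bbbF>\<^sub>q\<^sup>r\<close>:
  group by the exponent of the first variable and induct on \<open>r\<close>.\<close>

lemma aff_mon_eval_independent:
  fixes S :: "(nat \<Rightarrow> nat) set" and cf :: "(nat \<Rightarrow> nat) \<Rightarrow> 'a::{field,finite}"
  assumes "finite S" "\<forall>b\<in>S. (\<forall>i\<ge>r. b i = 0) \<and> (\<forall>i<r. b i < card (UNIV::'a set))"
    and "\<forall>y\<in>affine_points r. (\<Sum>b\<in>S. cf b * aff_mon_eval r b y) = 0"
  shows "\<forall>b\<in>S. cf b = 0"
  using assms
proof (induction r arbitrary: S cf)
  case 0
  hence "S \<subseteq> {\<lambda>_. 0}" by auto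
  hence "S = {} \<or> S = {\<lambda>_. 0}" by blast
  thus ?case using 0(3) by (auto simp: affine_points_0 aff_mon_eval_def)
next
  case (Suc r)
  let ?q = "card (UNIV::'a set)"
  let ?slice = "\<lambda>j. {b\<in>S. b 0 = j}"
  let ?g = "\<lambda>j y. \<Sum>b\<in>?slice j. cf b * aff_mon_eval r (\<lambda>i. b (Suc i)) y"
  have slice_zero: "?g j y = 0" if y: "y \<in> affine_points r" and j: "j < ?q" for j y
  proof (rule coeff_eq_0_if_poly_vanishes[OF _ j])
    fix x :: 'a
    have "x # y \<in> affine_points (Suc r)" using y by (simp add: affine_points_def)
    hence "0 = (\<Sum>b\<in>S. cf b * aff_mon_eval (Suc r) b (x # y))" using Suc.prems(3) by simp
    also have "\<dots> = (\<Sum>j<?q. ?g j y * x ^ j)"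
      by (rule sum_aff_mon_eval_Cons_by_head) (use Suc.prems(1,2) in auto)
    finally show "(\<Sum>j<?q. ?g j y * x ^ j) = 0" by simp
  qed
  show ?case
  proof
    fix b assume b: "b \<in> S"
    let ?tails = "(\<lambda>b i. b (Suc i)) ` ?slice (b 0)"
    have inj: "inj_on (\<lambda>b i. b (Suc i)) (?slice (b 0))"
      by (rule inj_onI) (subst fun_eq_iff_head_tail, simp)
    have "\<forall>d\<in>?tails. cf (case_nat (b 0) d) = 0"
    proof (rule Suc.IH)
      show "finite ?tails" using Suc.prems(1) by simp
      show "\<forall>d\<in>?tails. (\<forall>i\<ge>r. d i = 0) \<and> (\<forall>i<r. d i < ?q)"
        using Suc.prems(2) by auto
      show "\<forall>y\<in>affine_points r. (\<Sum>d\<in>?tails. cf (case_nat (b 0) d) * aff_mon_eval r d y) = 0"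
      proof
        fix y :: "'a list" assume y: "y \<in> affine_points r"
        have "(\<Sum>d\<in>?tails. cf (case_nat (b 0) d) * aff_mon_eval r d y) = ?g (b 0) y"
          by (subst sum.reindex[OF inj]) (auto intro!: sum.cong simp: case_nat_head_tail)
        thus "(\<Sum>d\<in>?tails. cf (case_nat (b 0) d) * aff_mon_eval r d y) = 0"
          using slice_zero[OF y] Suc.prems(2) b by simp
      qed
    qed
    moreover have "(\<lambda>i. b (Suc i)) \<in> ?tails" using b by blast
    ultimately have "cf (case_nat (b 0) (\<lambda>i. b (Suc i))) = 0" by blast
    thus "cf b = 0" by (simp add: case_nat_head_tail)
  qed
qed

lemma mon_eval_scale:
  assumes "length p = Suc n"
  shows "mon_eval b n (map ((*) t) p) = t ^ total_degree n b * mon_eval b n p"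
proof -
  have "mon_eval b n (map ((*) t) p) = (\<Prod>i\<le>n. t ^ b i * p ! i ^ b i)"
    unfolding mon_eval_def using assms by (intro prod.cong refl) (simp add: power_mult_distrib)
  thus ?thesis by (simp add: prod.distrib mon_eval_def total_degree_def power_sum)
qed

lemma nonzero_vector_eq_scaled_proj_point:
  fixes y :: "'a::field list"
  assumes "length y = Suc n" "\<exists>i<Suc n. y ! i \<noteq> 0"
  shows "\<exists>t p. t \<noteq> 0 \<and> p \<in> proj_points n \<and> y = map ((*) t) p"
proof -
  define i where "i = (LEAST i. i < Suc n \<and> y ! i \<noteq> 0)"
  have i: "i < Suc n" "y ! i \<noteq> 0" using LeastI_ex[OF assms(2)] unfolding i_def by auto
  have before: "y ! j = 0" if "j < i" for j
    using not_less_Least[of j "\<lambda>i. i < Suc n \<and> y ! i \<noteq> 0"] that i unfolding i_def by auto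
  define p where "p = map (\<lambda>x. x / y ! i) y"
  have "p \<in> proj_points n" unfolding proj_points_def
    using i before assms(1) by (auto simp: p_def intro!: exI[of _ i])
  moreover have "y = map ((*) (y ! i)) p"
    using i by (simp add: p_def map_idI)
  ultimately show ?thesis using i by blast
qed

text \<open>Exponent vectors reduced modulo \<open>x\<^sup>q = x\<close>, with total degree \<open>\<equiv> w (mod m)\<close>; for
  \<open>m = q - 1\<close> and \<open>0 < w < m\<close> their monomials form a basis of all functions on \<open>\<bbbP>\<^sup>n\<close>.\<close>

definition bounded_exps :: "nat \<Rightarrow> nat \<Rightarrow> (nat \<Rightarrow> nat) set" where
  "bounded_exps m n = {b. (\<forall>i>n. b i = 0) \<and> (\<forall>i\<le>n. b i \<le> m)}"

definition reduced_exps :: "nat \<Rightarrow> nat \<Rightarrow> nat \<Rightarrow> (nat \<Rightarrow> nat) set" where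
  "reduced_exps m n w = {b. (\<forall>i>n. b i = 0) \<and> (\<forall>i\<le>n. b i \<le> m) \<and> total_degree n b mod m = w}"

lemma aff_mon_eval_scaled:
  fixes t :: "'a::{field,finite}"
  assumes "t \<noteq> 0" "length p = Suc n" "total_degree n b mod (card (UNIV::'a set) - 1) = w"
  shows "aff_mon_eval (Suc n) b (map ((*) t) p) = t ^ w * mon_eval b n p"
proof -
  have "t ^ total_degree n b = t ^ w"
    using power_mod_card_minus_one[OF assms(1), of "total_degree n b"] assms(3) by simp
  thus ?thesis using mon_eval_scale[OF assms(2)] by (simp add: mon_eval_eq_aff_mon_eval[symmetric])
qed

lemma aff_mon_eval_eq_0:
  assumes "\<forall>i<Suc n. y ! i = 0" "total_degree n b \<noteq> 0"
  shows "aff_mon_eval (Suc n) b (y :: 'a::field list) = 0"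
proof -
  obtain i where "i \<le> n" "b i > 0" using assms(2) by (auto simp: total_degree_eq_0_iff)
  thus ?thesis using assms(1) unfolding aff_mon_eval_def by (intro prod_zero) (auto intro!: bexI[of _ i])
qed

text \<open>A degree-\<open>w\<close> form is determined by its values on representatives of \<open>\<bbbP>\<^sup>n\<close>, since
  \<open>t \<^bold>\<cdot> p\<close> scales it by \<open>t\<^sup>w\<close> and it vanishes at \<open>0\<close>; this reduces to the affine case.\<close>

lemma mon_eval_independent_on_proj_points:
  fixes S :: "(nat \<Rightarrow> nat) set" and cf :: "(nat \<Rightarrow> nat) \<Rightarrow> 'a::{field,finite}"
  defines "m \<equiv> card (UNIV::'a set) - 1"
  assumes "finite S" "S \<subseteq> reduced_exps m n w" "0 < w" "w < m"
    and "\<forall>p\<in>proj_points n. (\<Sum>b\<in>S. cf b * mon_eval b n p) = 0"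
  shows "\<forall>b\<in>S. cf b = 0"
proof (rule aff_mon_eval_independent[where r="Suc n"])
  have S: "\<forall>b\<in>S. (\<forall>i>n. b i = 0) \<and> (\<forall>i\<le>n. b i \<le> m) \<and> total_degree n b mod m = w"
    using assms(3) by (auto simp: reduced_exps_def)
  show "finite S" by fact
  show "\<forall>b\<in>S. (\<forall>i\<ge>Suc n. b i = 0) \<and> (\<forall>i<Suc n. b i < card (UNIV::'a set))"
  proof (intro ballI conjI allI impI)
    fix b i assume b: "b \<in> S"
    show "b i = 0" if "Suc n \<le> i" using S b that by auto
    show "b i < card (UNIV::'a set)" if "i < Suc n"
    proof -
      have "b i \<le> m" using S b that by auto
      thus ?thesis using card_UNIV_field_ge_2[where 'a='a] unfolding m_def by linarith
    qed
  qed
  show "\<forall>y\<in>affine_points (Suc n). (\<Sum>b\<in>S. cf b * aff_mon_eval (Suc n) b y) = 0"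
  proof
    fix y :: "'a list" assume y: "y \<in> affine_points (Suc n)"
    show "(\<Sum>b\<in>S. cf b * aff_mon_eval (Suc n) b y) = 0"
    proof (cases "\<exists>i<Suc n. y ! i \<noteq> 0")
      case True
      then obtain t p where tp: "t \<noteq> 0" "p \<in> proj_points n" "y = map ((*) t) p"
        using nonzero_vector_eq_scaled_proj_point[of y n] y by (auto simp: affine_points_def)
      have "(\<Sum>b\<in>S. cf b * aff_mon_eval (Suc n) b y) = t ^ w * (\<Sum>b\<in>S. cf b * mon_eval b n p)"
        using aff_mon_eval_scaled[OF tp(1) length_proj_points[OF tp(2)]] S tp(3)
        by (simp add: sum_distrib_left mult_ac m_def)
      thus ?thesis using assms(6) tp(2) by simp
    next
      case False
      have "aff_mon_eval (Suc n) b y = 0" if "b \<in> S" for b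
      proof (rule aff_mon_eval_eq_0)
        show "\<forall>i<Suc n. y ! i = 0" using False by simp
        show "total_degree n b \<noteq> 0" using S that assms(4) by (cases "total_degree n b") auto
      qed
      thus ?thesis by simp
    qed
  qed
qed

lemma bounded_exps_0: "bounded_exps m 0 = (\<lambda>j. case_nat j (\<lambda>_. 0)) ` {..m}"
proof (intro set_eqI iffI)
  fix b assume b: "b \<in> bounded_exps m 0"
  hence "b = case_nat (b 0) (\<lambda>_. 0)" by (auto simp: bounded_exps_def fun_eq_iff split: nat.split)
  moreover have "b 0 \<in> {..m}" using b by (auto simp: bounded_exps_def)
  ultimately show "b \<in> (\<lambda>j. case_nat j (\<lambda>_. 0)) ` {..m}" by blast
qed (auto simp: bounded_exps_def split: nat.split)

lemma bounded_exps_Suc: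
  "bounded_exps m (Suc n) = (\<lambda>(j, d). case_nat j d) ` ({..m} \<times> bounded_exps m n)"
proof (intro set_eqI iffI)
  fix b assume b: "b \<in> bounded_exps m (Suc n)"
  have "(b 0, (\<lambda>i. b (Suc i))) \<in> {..m} \<times> bounded_exps m n" using b by (auto simp: bounded_exps_def)
  thus "b \<in> (\<lambda>(j, d). case_nat j d) ` ({..m} \<times> bounded_exps m n)"
    using case_nat_head_tail[of b, OF refl] by force
qed (auto simp: bounded_exps_def split: nat.split)

lemma inj_on_case_nat: "inj_on (\<lambda>(j, d). case_nat j d) X"
  by (rule inj_onI) (auto simp: fun_eq_iff_head_tail[of "case_nat _ _"])

lemma finite_bounded_exps: "finite (bounded_exps m n)"
  by (induction n) (simp_all add: bounded_exps_0 bounded_exps_Suc)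

lemma card_bounded_exps: "card (bounded_exps m n) = Suc m ^ Suc n"
proof (induction n)
  case 0
  have "inj_on (\<lambda>j. case_nat j (\<lambda>_. 0)) {..m}"
    by (rule inj_onI) (metis nat.simps(4))
  thus ?case by (simp add: bounded_exps_0 card_image)
next
  case (Suc n)
  thus ?case by (simp add: bounded_exps_Suc card_image[OF inj_on_case_nat] card_cartesian_product)
qed

lemma finite_reduced_exps: "finite (reduced_exps m n w)"
  by (rule finite_subset[OF _ finite_bounded_exps]) (auto simp: reduced_exps_def bounded_exps_def)

lemma exists_shift_mod:
  fixes w m t :: nat
  assumes "0 < w" "w < m"
  shows "\<exists>j. 1 \<le> j \<and> j \<le> m \<and> (j + t) mod m = w"
proof -
  define r where "r = (t + m - w) mod m"
  have "r < m" using assms by (simp add: r_def)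
  moreover have "t + m - w = m * ((t + m - w) div m) + r" by (simp add: r_def)
  hence "m - r + t = m * ((t + m - w) div m) + w" using \<open>r < m\<close> assms by linarith
  hence "(m - r + t) mod m = w" using assms by simp
  ultimately show ?thesis by (intro exI[of _ "m - r"]) auto
qed

text \<open>Counting along \<open>\<bbbP>\<^sup>n\<^sup>+\<^sup>1 = \<bbbP>\<^sup>n \<union> \<bbbF>\<^sub>q\<^sup>n\<^sup>+\<^sup>1\<close>: an exponent vector with first entry \<open>0\<close>
  extends a reduced one, and any bounded tail can be completed to a reduced vector by a
  first entry in \<open>{1..m}\<close>.\<close>

lemma card_proj_points_le_card_reduced_exps:
  assumes "0 < w" "w < m" "m = card (UNIV::'a::{field,finite} set) - 1"
  shows "card (proj_points n :: 'a list set) \<le> card (reduced_exps m n w)"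
proof (induction n)
  case 0
  have "case_nat w (\<lambda>_. 0) \<in> reduced_exps m 0 w"
    using assms(1,2) by (auto simp: reduced_exps_def total_degree_0 split: nat.split)
  hence "1 \<le> card (reduced_exps m 0 w)"
    using finite_reduced_exps by (metis One_nat_def Suc_leI card_gt_0_iff empty_iff)
  thus ?case by (simp add: proj_points_0)
next
  case (Suc n)
  define lead where "lead d = (SOME j. 1 \<le> j \<and> j \<le> m \<and> (j + total_degree n d) mod m = w)" for d
  have lead: "1 \<le> lead d \<and> lead d \<le> m \<and> (lead d + total_degree n d) mod m = w" for d
    unfolding lead_def by (rule someI_ex) (rule exists_shift_mod[OF assms(1,2)])
  let ?A = "case_nat 0 ` reduced_exps m n w"
  let ?B = "(\<lambda>d. case_nat (lead d) d) ` bounded_exps m n"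
  have sub: "?A \<union> ?B \<subseteq> reduced_exps m (Suc n) w"
  proof
    fix b assume "b \<in> ?A \<union> ?B"
    thus "b \<in> reduced_exps m (Suc n) w"
    proof
      assume "b \<in> ?A"
      thus ?thesis by (auto simp: reduced_exps_def total_degree_Suc split: nat.split)
    next
      assume "b \<in> ?B"
      then obtain d where "d \<in> bounded_exps m n" "b = case_nat (lead d) d" by auto
      thus ?thesis using lead[of d]
        by (auto simp: reduced_exps_def bounded_exps_def total_degree_Suc split: nat.split)
    qed
  qed
  have "case_nat 0 x \<noteq> case_nat (lead d) d" for x d
    using lead[of d] by (auto dest: fun_cong[of _ _ 0])
  hence disj: "?A \<inter> ?B = {}" by blast
  have inj_A: "inj_on (case_nat 0) (reduced_exps m n w)"
    by (rule inj_onI) (simp add: fun_eq_iff_head_tail[of "case_nat _ _"])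
  have inj_B: "inj_on (\<lambda>d. case_nat (lead d) d) (bounded_exps m n)"
    by (rule inj_onI) (simp add: fun_eq_iff_head_tail[of "case_nat _ _"])
  have "card (proj_points (Suc n) :: 'a list set)
      = card (proj_points n :: 'a list set) + card (UNIV::'a set) ^ Suc n"
    by (rule card_proj_points_Suc)
  also have "\<dots> \<le> card (reduced_exps m n w) + card (bounded_exps m n)"
    using Suc.IH card_bounded_exps[of m n] assms(3) card_UNIV_field_ge_2[where 'a='a] by simp
  also have "\<dots> = card (?A \<union> ?B)"
    using disj finite_reduced_exps finite_bounded_exps
    by (subst card_Un_disjoint) (auto simp: card_image inj_A inj_B)
  also have "\<dots> \<le> card (reduced_exps m (Suc n) w)"
    by (rule card_mono[OF finite_reduced_exps sub])
  finally show ?case .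
qed

section \<open>Projective Reed--Muller codes as spaces of functions on \<open>\<bbbP>\<^sup>n\<close>\<close>

interpretation fv: vector_space "fscale :: 'a::field \<Rightarrow> ('b \<Rightarrow> 'a) \<Rightarrow> ('b \<Rightarrow> 'a)"
  by unfold_locales (auto simp: fscale_def fun_eq_iff algebra_simps)

lemma fscale_apply [simp]: "fscale c f x = c * f x"
  by (simp add: fscale_def)

lemma sum_fun_apply: "(\<Sum>x\<in>A. f x) p = (\<Sum>x\<in>A. f x p)"
  by (induction A rule: infinite_finite_induct) auto

definition mon_fun :: "nat \<Rightarrow> (nat \<Rightarrow> nat) \<Rightarrow> ('a::field) list \<Rightarrow> 'a" where
  "mon_fun n e = (\<lambda>p. if p \<in> proj_points n then mon_eval e n p else 0)"

definition proj_funs :: "nat \<Rightarrow> (('a::field) list \<Rightarrow> 'a) set" where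
  "proj_funs n = {u. \<forall>p. p \<notin> proj_points n \<longrightarrow> u p = 0}"

definition proj_inner :: "nat \<Rightarrow> ('a::field list \<Rightarrow> 'a) \<Rightarrow> ('a list \<Rightarrow> 'a) \<Rightarrow> 'a" where
  "proj_inner n u v = (\<Sum>p\<in>proj_points n. u p * v p)"

lemma subspace_proj_funs: "fv.subspace (proj_funs n)"
  unfolding fv.subspace_def proj_funs_def by auto

lemma mon_fun_in_proj_funs: "mon_fun n e \<in> proj_funs n"
  by (simp add: mon_fun_def proj_funs_def)

lemma span_mon_fun_subset_proj_funs: "fv.span (mon_fun n ` X) \<subseteq> proj_funs n"
  by (rule fv.span_minimal) (auto simp: mon_fun_in_proj_funs subspace_proj_funs)

lemma monomials_total_degree: "e \<in> monomials n d \<Longrightarrow> total_degree n e = d"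
  by (simp add: monomials_def total_degree_def)

lemma monomials_le: "e \<in> monomials n d \<Longrightarrow> i \<le> n \<Longrightarrow> e i \<le> d"
  unfolding monomials_def
  by (auto intro: order.trans[OF member_le_sum[of i "{..n}" e]] simp: atMost_iff)

lemma finite_monomials: "finite (monomials n k)"
proof (rule finite_subset[OF _ finite_bounded_exps[of k n]])
  show "monomials n k \<subseteq> bounded_exps k n"
  proof
    fix e assume e: "e \<in> monomials n k"
    thus "e \<in> bounded_exps k n" using monomials_le[OF e] by (auto simp: bounded_exps_def monomials_def)
  qed
qed

lemma card_monomials: "card (monomials n l) = (n + l) choose l"
proof -
  have "monomials n l = count ` multisets_of_size {..n} l"
  proof (intro set_eqI iffI)
    fix e assume e: "e \<in> monomials n l"
    have supp: "x \<le> n" if "0 < e x" for x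
    proof (rule ccontr)
      assume "\<not> x \<le> n"
      thus False using e that by (simp add: monomials_def)
    qed
    have fin: "finite {x. e x > 0}"
      by (rule finite_subset[of _ "{..n}"]) (use supp in auto)
    define M where "M = Abs_multiset e"
    have count_M: "count M = e" unfolding M_def by (rule count_Abs_multiset[OF fin])
    have set_M: "set_mset M = {x. e x > 0}" using count_M by (auto simp: set_mset_def)
    have "size M = (\<Sum>x\<in>{..n}. e x)"
      unfolding size_multiset_overloaded_eq count_M using set_M supp
      by (intro sum.mono_neutral_left) auto
    hence "M \<in> multisets_of_size {..n} l"
      using set_M supp e by (auto simp: multisets_of_size_def monomials_def)
    thus "e \<in> count ` multisets_of_size {..n} l" using count_M by blast
  next
    fix e assume "e \<in> count ` multisets_of_size {..n} l"
    then obtain M where M: "set_mset M \<subseteq> {..n}" "size M = l" "e = count M"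
      by (auto simp: multisets_of_size_def)
    have "(\<Sum>i\<le>n. count M i) = size M"
      unfolding size_multiset_overloaded_eq using M(1)
      by (intro sum.mono_neutral_right) (auto simp: count_eq_zero_iff)
    moreover have "\<forall>i>n. count M i = 0" using M(1) by (auto simp: count_eq_zero_iff)
    ultimately show "e \<in> monomials n l" using M by (simp add: monomials_def)
  qed
  moreover have "inj_on count (multisets_of_size {..n} l)"
    by (rule inj_onI) (simp add: multiset_eq_iff)
  ultimately show ?thesis by (simp add: card_image card_multisets_of_size)
qed

lemma PRM_expansion:
  assumes "v \<in> (PRM n k :: ('a::{field,finite} list \<Rightarrow> 'a) set)"
  obtains c where "v = (\<Sum>e\<in>monomials n k. fscale (c e) (mon_fun n e))"
proof -
  obtain c where c: "\<forall>p. v p = (if p \<in> proj_points n then (\<Sum>e\<in>monomials n k. c e * mon_eval e n p) else 0)"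
    using assms unfolding PRM_def by blast
  have "v = (\<Sum>e\<in>monomials n k. fscale (c e) (mon_fun n e))"
    by (rule ext) (auto simp: c sum_fun_apply mon_fun_def)
  thus ?thesis using that by blast
qed

lemma subspace_PRM: "fv.subspace (PRM n k :: ('a::{field,finite} list \<Rightarrow> 'a) set)"
  unfolding fv.subspace_def
proof (intro conjI ballI allI)
  show "0 \<in> (PRM n k :: ('a list \<Rightarrow> 'a) set)"
    unfolding PRM_def by (auto intro!: exI[of _ "\<lambda>_. 0"])
next
  fix x y :: "'a list \<Rightarrow> 'a" assume "x \<in> PRM n k" "y \<in> PRM n k"
  then obtain c d where
    "\<forall>p. x p = (if p \<in> proj_points n then (\<Sum>e\<in>monomials n k. c e * mon_eval e n p) else 0)"
    "\<forall>p. y p = (if p \<in> proj_points n then (\<Sum>e\<in>monomials n k. d e * mon_eval e n p) else 0)"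
    unfolding PRM_def by blast
  thus "x + y \<in> PRM n k" unfolding PRM_def
    by (auto intro!: exI[of _ "\<lambda>e. c e + d e"] simp: algebra_simps sum.distrib)
next
  fix a :: 'a and x :: "'a list \<Rightarrow> 'a" assume "x \<in> PRM n k"
  then obtain c where
    "\<forall>p. x p = (if p \<in> proj_points n then (\<Sum>e\<in>monomials n k. c e * mon_eval e n p) else 0)"
    unfolding PRM_def by blast
  thus "fscale a x \<in> PRM n k" unfolding PRM_def
    by (auto intro!: exI[of _ "\<lambda>e. a * c e"] simp: sum_distrib_left mult_ac)
qed

lemma mon_fun_in_PRM_same_degree:
  assumes "e \<in> monomials n k"
  shows "(mon_fun n e :: 'a::{field,finite} list \<Rightarrow> 'a) \<in> PRM n k"
  unfolding PRM_def
proof (intro CollectI exI[of _ "\<lambda>e'. if e' = e then 1 else 0"] allI)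
  fix p :: "'a list"
  have "(\<Sum>e'\<in>monomials n k. (if e' = e then 1 else 0) * mon_eval e' n p)
      = (\<Sum>e'\<in>monomials n k. if e' = e then mon_eval e' n p else 0)"
    by (rule sum.cong) auto
  also have "\<dots> = mon_eval e n p" using assms finite_monomials by (simp add: sum.delta)
  finally have "(\<Sum>e'\<in>monomials n k. (if e' = e then 1 else 0) * mon_eval e' n p) = mon_eval e n p" .
  thus "mon_fun n e p = (if p \<in> proj_points n
      then \<Sum>e'\<in>monomials n k. (if e' = e then 1 else 0) * mon_eval e' n p else 0)"
    by (simp add: mon_fun_def)
qed

lemma PRM_eq_span: "(PRM n k :: ('a::{field,finite} list \<Rightarrow> 'a) set) = fv.span (mon_fun n ` monomials n k)"
proof
  show "(PRM n k :: ('a list \<Rightarrow> 'a) set) \<subseteq> fv.span (mon_fun n ` monomials n k)"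
  proof
    fix v :: "'a list \<Rightarrow> 'a" assume "v \<in> PRM n k"
    then obtain c where "v = (\<Sum>e\<in>monomials n k. fscale (c e) (mon_fun n e))"
      by (rule PRM_expansion)
    also have "\<dots> \<in> fv.span (mon_fun n ` monomials n k)"
      by (intro fv.span_sum fv.span_scale fv.span_base) auto
    finally show "v \<in> fv.span (mon_fun n ` monomials n k)" .
  qed
  show "fv.span (mon_fun n ` monomials n k) \<subseteq> (PRM n k :: ('a list \<Rightarrow> 'a) set)"
    by (rule fv.span_minimal) (auto intro: mon_fun_in_PRM_same_degree subspace_PRM)
qed

lemma proj_funs_subset_span_point_indicators:
  "proj_funs n \<subseteq> fv.span ((\<lambda>p x. of_bool (x = p)) ` (proj_points n :: ('a::{field,finite}) list set)
                            :: ('a list \<Rightarrow> 'a) set)"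
proof
  fix u :: "'a list \<Rightarrow> 'a" assume u: "u \<in> proj_funs n"
  have "u = (\<Sum>p\<in>proj_points n. fscale (u p) (\<lambda>x. of_bool (x = p)))"
    using u by (auto simp: fun_eq_iff sum_fun_apply proj_funs_def of_bool_def if_distrib cong: if_cong)
  also have "\<dots> \<in> fv.span ((\<lambda>p x. of_bool (x = p)) ` proj_points n)"
    by (intro fv.span_sum fv.span_scale fv.span_base) auto
  finally show "u \<in> fv.span ((\<lambda>p x. of_bool (x = p)) ` proj_points n)" .
qed

lemma proj_inner_mon_fun:
  "proj_inner n (mon_fun n a) (mon_fun n b :: 'a::{field,finite} list \<Rightarrow> 'a) = proj_mon_sum n (\<lambda>i. a i + b i)"
  unfolding proj_inner_def proj_mon_sum_def mon_fun_def mon_eval_def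
  by (intro sum.cong refl) (simp add: power_add prod.distrib)

lemma proj_inner_sum_left:
  "finite B \<Longrightarrow> proj_inner n (\<Sum>b\<in>B. fscale (c b) (f b)) v = (\<Sum>b\<in>B. c b * proj_inner n (f b) v)"
  unfolding proj_inner_def
  by (simp add: sum_fun_apply sum_distrib_right sum_distrib_left mult_ac sum.swap[of _ B])

lemma proj_inner_commute: "proj_inner n u v = proj_inner n v u"
  unfolding proj_inner_def by (simp add: mult.commute)

lemma subspace_dual_code: "fv.subspace (dual_code n (C :: ('a::field list \<Rightarrow> 'a) set))"
  unfolding fv.subspace_def dual_code_def
  by (auto simp: algebra_simps sum.distrib sum_distrib_left[symmetric])

lemma dual_code_subset_proj_funs: "dual_code n C \<subseteq> proj_funs n"
  by (auto simp: dual_code_def proj_funs_def)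

lemma proj_inner_dual_code: "u \<in> dual_code n C \<Longrightarrow> v \<in> C \<Longrightarrow> proj_inner n u v = 0"
  by (simp add: dual_code_def proj_inner_def)

lemma in_dual_codeI:
  assumes "u \<in> proj_funs n" "\<And>v. v \<in> C \<Longrightarrow> proj_inner n u v = 0"
  shows "u \<in> dual_code n C"
  using assms by (simp add: dual_code_def proj_funs_def proj_inner_def)

lemma inj_on_mon_fun_reduced:
  assumes m: "m = card (UNIV::'a::{field,finite} set) - 1" and w: "0 < w" "w < m"
    and B: "B \<subseteq> reduced_exps m n w"
  shows "inj_on (mon_fun n :: _ \<Rightarrow> 'a list \<Rightarrow> 'a) B"
proof (rule inj_onI, rule ccontr)
  fix b1 b2 assume b: "b1 \<in> B" "b2 \<in> B" "(mon_fun n b1 :: 'a list \<Rightarrow> 'a) = mon_fun n b2" "b1 \<noteq> b2"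
  define cf :: "(nat \<Rightarrow> nat) \<Rightarrow> 'a" where "cf b = (if b = b1 then 1 else if b = b2 then -1 else 0)" for b
  have "\<forall>b\<in>{b1, b2}. cf b = 0"
  proof (rule mon_eval_independent_on_proj_points)
    show "{b1, b2} \<subseteq> reduced_exps (card (UNIV::'a set) - 1) n w" using B b m by auto
    show "0 < w" "w < card (UNIV::'a set) - 1" using w m by auto
    show "\<forall>p\<in>proj_points n. (\<Sum>b\<in>{b1, b2}. cf b * mon_eval b n p) = 0"
    proof
      fix p :: "'a list" assume "p \<in> proj_points n"
      hence "mon_eval b1 n p = mon_eval b2 n p" using b(3) by (metis mon_fun_def)
      thus "(\<Sum>b\<in>{b1, b2}. cf b * mon_eval b n p) = 0" using b(4) by (simp add: cf_def)
    qed
  qed simp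
  thus False by (simp add: cf_def)
qed

lemma independent_mon_fun_reduced:
  assumes m: "m = card (UNIV::'a::{field,finite} set) - 1" and w: "0 < w" "w < m"
    and B: "B \<subseteq> reduced_exps m n w"
  shows "fv.independent (mon_fun n ` B :: ('a list \<Rightarrow> 'a) set)"
proof
  have finite_B: "finite B" using finite_subset[OF B finite_reduced_exps] .
  assume "fv.dependent (mon_fun n ` B :: ('a list \<Rightarrow> 'a) set)"
  then obtain u where u: "\<exists>v\<in>mon_fun n ` B. u v \<noteq> 0"
    "(\<Sum>v\<in>mon_fun n ` B. fscale (u v) v) = (0 :: 'a list \<Rightarrow> 'a)"
    using fv.dependent_finite[of "mon_fun n ` B"] finite_B by blast
  have combination: "(\<Sum>b\<in>B. fscale (u (mon_fun n b)) (mon_fun n b)) = (0 :: 'a list \<Rightarrow> 'a)"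
    using u(2) by (simp add: sum.reindex[OF inj_on_mon_fun_reduced[OF m w B]])
  have "\<forall>b\<in>B. u (mon_fun n b) = 0"
  proof (rule mon_eval_independent_on_proj_points)
    show "B \<subseteq> reduced_exps (card (UNIV::'a set) - 1) n w" using B m by simp
    show "0 < w" "w < card (UNIV::'a set) - 1" using w m by auto
    show "\<forall>p\<in>proj_points n. (\<Sum>b\<in>B. u (mon_fun n b) * mon_eval b n p) = 0"
    proof
      fix p :: "'a list" assume p: "p \<in> proj_points n"
      have "(\<Sum>b\<in>B. fscale (u (mon_fun n b)) (mon_fun n b)) p = 0" using combination by simp
      thus "(\<Sum>b\<in>B. u (mon_fun n b) * mon_eval b n p) = 0"
        using p by (simp add: sum_fun_apply mon_fun_def)
    qed
  qed (rule finite_B)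
  thus False using u(1) by auto
qed

text \<open>By \<open>card_proj_points_le_card_reduced_exps\<close>, an independent family of at least
  \<open>card \<bbbP>\<^sup>n\<close> elements, so a basis of all functions on \<open>\<bbbP>\<^sup>n\<close>.\<close>

lemma proj_funs_subset_span_reduced:
  assumes m: "m = card (UNIV::'a::{field,finite} set) - 1" and w: "0 < w" "w < m"
  shows "(proj_funs n :: ('a list \<Rightarrow> 'a) set) \<subseteq> fv.span (mon_fun n ` reduced_exps m n w)"
proof
  let ?B = "mon_fun n ` reduced_exps m n w :: ('a list \<Rightarrow> 'a) set"
  let ?I = "(\<lambda>p x. of_bool (x = p)) ` proj_points n :: ('a list \<Rightarrow> 'a) set"
  have ind: "fv.independent ?B" by (rule independent_mon_fun_reduced[OF m w order_refl])
  have card_B: "card ?B = card (reduced_exps m n w)"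
    by (rule card_image[OF inj_on_mon_fun_reduced[OF m w order_refl]])
  fix u :: "'a list \<Rightarrow> 'a" assume u: "u \<in> proj_funs n"
  show "u \<in> fv.span ?B"
  proof (rule ccontr)
    assume not_in: "u \<notin> fv.span ?B"
    hence ind_u: "fv.independent (insert u ?B)" using fv.independent_insertI ind by blast
    have "insert u ?B \<subseteq> fv.span ?I"
      using u proj_funs_subset_span_point_indicators[of n] span_mon_fun_subset_proj_funs[of n]
        fv.span_superset[of ?B] by blast
    from fv.independent_span_bound[OF _ ind_u this]
    have "card (insert u ?B) \<le> card ?I" by simp
    also have "\<dots> \<le> card (proj_points n :: 'a list set)" by (rule card_image_le) simp
    also have "\<dots> \<le> card (reduced_exps m n w)" by (rule card_proj_points_le_card_reduced_exps[OF w m])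
    finally have "card (insert u ?B) \<le> card ?B" using card_B by simp
    moreover have "u \<notin> ?B" using not_in fv.span_superset[of ?B] by blast
    ultimately show False using finite_reduced_exps by simp
  qed
qed

lemma proj_funs_expansion:
  assumes m: "m = card (UNIV::'a::{field,finite} set) - 1" and w: "0 < w" "w < m"
    and u: "(u :: 'a list \<Rightarrow> 'a) \<in> proj_funs n"
  obtains c where "u = (\<Sum>b\<in>reduced_exps m n w. fscale (c b) (mon_fun n b))"
proof -
  let ?B = "mon_fun n ` reduced_exps m n w :: ('a list \<Rightarrow> 'a) set"
  have "u \<in> fv.span ?B" using proj_funs_subset_span_reduced[OF m w] u by blast
  then obtain cu where "u = (\<Sum>v\<in>?B. fscale (cu v) v)"
    using fv.span_finite[of ?B] finite_reduced_exps by auto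
  hence "u = (\<Sum>b\<in>reduced_exps m n w. fscale (cu (mon_fun n b)) (mon_fun n b))"
    by (simp add: sum.reindex[OF inj_on_mon_fun_reduced[OF m w order_refl]])
  thus ?thesis by (rule that)
qed

text \<open>On \<open>\<bbbP>\<^sup>n\<close> a monomial can be raised to any degree \<open>d \<ge> deg\<close> with \<open>d \<equiv> deg (mod q - 1)\<close>
  without changing its values: multiply a variable occurring in it by \<open>x\<^sup>d\<^sup>-\<^sup>d\<^sup>e\<^sup>g = 1\<close>.\<close>

lemma mon_fun_in_PRM:
  assumes m: "m = card (UNIV::'a::{field,finite} set) - 1"
    and supp: "\<forall>i>n. b i = 0" and pos: "total_degree n b > 0" and le: "total_degree n b \<le> d"
    and dvd: "m dvd (d - total_degree n b)"
  shows "(mon_fun n b :: 'a list \<Rightarrow> 'a) \<in> PRM n d"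
proof -
  have "\<exists>i\<le>n. b i \<noteq> 0" using pos total_degree_eq_0_iff[of n b] by auto
  then obtain i where i: "i \<le> n" "b i > 0" by auto
  define b' where "b' = b(i := b i + (d - total_degree n b))"
  have "(\<Sum>j\<le>n. b' j) = (\<Sum>j\<le>n. b j + (if j = i then d - total_degree n b else 0))"
    by (intro sum.cong) (auto simp: b'_def)
  also have "\<dots> = d" using i le by (simp add: sum.distrib total_degree_def)
  finally have "b' \<in> monomials n d" using supp i by (auto simp: monomials_def b'_def)
  moreover have "(mon_fun n b' :: 'a list \<Rightarrow> 'a) = mon_fun n b"
  proof
    fix p :: "'a list"
    have "p ! i ^ b' i = p ! i ^ b i"
    proof (cases "p ! i = 0")
      case True thus ?thesis using i by (simp add: b'_def power_0_left)
    next
      case False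
      obtain r where "d - total_degree n b = m * r" using dvd by blast
      hence "p ! i ^ (d - total_degree n b) = 1"
        using fermat_finite_field[OF False] m by (simp add: power_mult)
      thus ?thesis by (simp add: b'_def power_add)
    qed
    hence "mon_eval b' n p = mon_eval b n p"
      unfolding mon_eval_def by (intro prod.cong refl) (auto simp: b'_def)
    thus "mon_fun n b' p = mon_fun n b p" by (simp add: mon_fun_def)
  qed
  ultimately show ?thesis by (metis mon_fun_in_PRM_same_degree)
qed

section \<open>Duals of projective Reed--Muller codes\<close>

definition exp_complement :: "nat \<Rightarrow> nat \<Rightarrow> (nat \<Rightarrow> nat) \<Rightarrow> nat \<Rightarrow> nat" where
  "exp_complement m n b = (\<lambda>i. if i \<le> n then m - b i else 0)"

lemma total_degree_exp_complement:
  assumes "\<forall>i\<le>n. b i \<le> m"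
  shows "total_degree n (exp_complement m n b) + total_degree n b = Suc n * m"
proof -
  have "total_degree n (exp_complement m n b) + total_degree n b = (\<Sum>i\<le>n. (m - b i) + b i)"
    by (simp add: total_degree_def exp_complement_def sum.distrib)
  also have "\<dots> = (\<Sum>i\<le>n. m)" using assms by (intro sum.cong) auto
  finally show ?thesis by simp
qed

text \<open>Pairing reduced monomials with complements is triangular for the total degree:
  \<open>x\<^sup>b\<close> and \<open>x\<^sup>m\<^sup>-\<^sup>b\<^sup>0\<close> can only pair nontrivially if \<open>b \<ge> b\<^sub>0\<close> componentwise, because
  otherwise some exponent of \<open>x\<^sup>b\<^sup>+\<^sup>m\<^sup>-\<^sup>b\<^sup>0\<close> lies strictly between \<open>0\<close> and \<open>m\<close>.\<close>

lemma proj_mon_sum_complement_nonzero: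
  fixes b b0 :: "nat \<Rightarrow> nat"
  assumes m: "m = card (UNIV::'a::{field,finite} set) - 1" and w: "0 < w" "w < m"
    and b: "b \<in> reduced_exps m n w" and b0: "b0 \<in> reduced_exps m n w"
    and nonzero: "(proj_mon_sum n (\<lambda>i. b i + exp_complement m n b0 i) :: 'a) \<noteq> 0"
  shows "b = b0 \<or> total_degree n b0 < total_degree n b"
proof -
  let ?c = "\<lambda>i. b i + exp_complement m n b0 i"
  have bb: "\<forall>i\<le>n. b0 i \<le> m" "\<forall>i>n. b i = 0" "\<forall>i>n. b0 i = 0"
    "total_degree n b mod m = w" "total_degree n b0 mod m = w"
    using b b0 by (auto simp: reduced_exps_def)
  have deg_c: "total_degree n ?c + total_degree n b0 = total_degree n b + Suc n * m"
    using total_degree_exp_complement[OF bb(1)] total_degree_add[of n b "exp_complement m n b0"] by simp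
  have "m dvd total_degree n ?c"
  proof -
    have "int (total_degree n ?c)
        = int (total_degree n b) - int (total_degree n b0) + int (Suc n * m)"
      using deg_c by linarith
    moreover have "int m dvd int (total_degree n b) - int (total_degree n b0)"
      using bb(4,5) by (metis mod_eq_dvd_iff of_nat_mod)
    ultimately have "int m dvd int (total_degree n ?c)" by simp
    thus ?thesis by simp
  qed
  moreover have "total_degree n ?c > 0"
    using bb(4) w total_degree_add[of n b "exp_complement m n b0"] by (cases "total_degree n b") auto
  ultimately have "(proj_mon_sum n ?c :: 'a) = - (\<Prod>i\<le>n. power_sum (?c i))"
    using proj_mon_sum_degree_multiple[of n ?c] m by simp
  hence "(\<Prod>i\<le>n. (power_sum (?c i) :: 'a)) \<noteq> 0" using nonzero by simp
  from prod_power_sum_nonzero[OF this] have c_mult: "0 < ?c i \<and> m dvd ?c i" if "i \<le> n" for i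
    using m that by simp
  have ge: "b0 i \<le> b i" if i: "i \<le> n" for i
  proof (rule ccontr)
    assume "\<not> b0 i \<le> b i"
    hence "?c i < m" using i bb(1) by (auto simp: exp_complement_def)
    thus False using c_mult[OF i] by (meson dvd_imp_le not_le)
  qed
  show ?thesis
  proof (cases "b = b0")
    case False
    then obtain i where i: "b i \<noteq> b0 i" by auto
    hence "i \<le> n" using bb(2,3) by (metis not_le)
    hence "b0 i < b i" using ge[of i] i by linarith
    hence "(\<Sum>j\<le>n. b0 j) < (\<Sum>j\<le>n. b j)"
      using ge \<open>i \<le> n\<close> by (intro sum_strict_mono_ex1) auto
    thus ?thesis by (simp add: total_degree_def)
  qed simp
qed

lemma proj_mon_sum_own_complement:
  fixes b :: "nat \<Rightarrow> nat"
  assumes m: "m = card (UNIV::'a::{field,finite} set) - 1" and b: "\<forall>i\<le>n. b i \<le> m"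
  shows "(proj_mon_sum n (\<lambda>i. b i + exp_complement m n b i) :: 'a) \<noteq> 0"
proof -
  let ?c = "\<lambda>i. b i + exp_complement m n b i"
  have m_pos: "0 < m" using m card_UNIV_field_ge_2[where 'a='a] by simp
  have c: "\<forall>i\<le>n. ?c i = m" using b by (simp add: exp_complement_def)
  hence deg: "total_degree n ?c = Suc n * m" by (simp add: total_degree_def)
  have "m dvd total_degree n ?c" unfolding deg by simp
  hence "(proj_mon_sum n ?c :: 'a) = - (\<Prod>i\<le>n. power_sum (?c i))"
    using deg m_pos m proj_mon_sum_degree_multiple[of n ?c] by simp
  also have "\<dots> = - (\<Prod>i\<le>n. (-1::'a))"
    using c power_sum_multiple[where 'a='a, of m] m m_pos
    by (intro arg_cong[where f=uminus] prod.cong) auto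
  finally show ?thesis by simp
qed

text \<open>If \<open>u\<close> is orthogonal to the complements of all reduced monomials of degree \<open>> thr\<close>,
  then \<open>u\<close> has no such monomials: pair \<open>u\<close> with the complement of one of maximal degree.\<close>

lemma reduced_coeffs_vanish_above:
  fixes c :: "(nat \<Rightarrow> nat) \<Rightarrow> 'a::{field,finite}"
  assumes m: "m = card (UNIV::'a set) - 1" and w: "0 < w" "w < m"
    and u: "u = (\<Sum>b\<in>reduced_exps m n w. fscale (c b) (mon_fun n b))"
    and orth: "\<And>b. b \<in> reduced_exps m n w \<Longrightarrow> thr < total_degree n b
                  \<Longrightarrow> proj_inner n u (mon_fun n (exp_complement m n b)) = 0"
    and b: "b \<in> reduced_exps m n w" "thr < total_degree n b"
  shows "c b = 0"
proof (rule ccontr)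
  assume "c b \<noteq> 0"
  define X where "X = {b\<in>reduced_exps m n w. thr < total_degree n b \<and> c b \<noteq> 0}"
  have "finite X" "X \<noteq> {}" using finite_reduced_exps b \<open>c b \<noteq> 0\<close> by (auto simp: X_def)
  then obtain b0 where b0: "b0 \<in> X" and max: "\<And>b. b \<in> X \<Longrightarrow> total_degree n b \<le> total_degree n b0"
    using Max_in[of "total_degree n ` X"] Max_ge[of "total_degree n ` X"] by fastforce
  have b0_red: "b0 \<in> reduced_exps m n w" and b0_thr: "thr < total_degree n b0" and c_b0: "c b0 \<noteq> 0"
    using b0 by (auto simp: X_def)
  let ?T = "\<lambda>b. proj_mon_sum n (\<lambda>i. b i + exp_complement m n b0 i) :: 'a"
  have other: "c b * ?T b = 0" if "b \<in> reduced_exps m n w" "b \<noteq> b0" for b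
  proof (rule ccontr)
    assume nonzero: "c b * ?T b \<noteq> 0"
    hence "total_degree n b0 < total_degree n b"
      using proj_mon_sum_complement_nonzero[OF m w that(1) b0_red] that(2) by auto
    moreover from this have "b \<in> X" using nonzero that(1) b0_thr by (auto simp: X_def)
    ultimately show False using max by fastforce
  qed
  have "proj_inner n u (mon_fun n (exp_complement m n b0)) = (\<Sum>b\<in>reduced_exps m n w. c b * ?T b)"
    unfolding u by (simp add: proj_inner_sum_left finite_reduced_exps proj_inner_mon_fun)
  also have "\<dots> = c b0 * ?T b0"
  proof -
    have "(\<Sum>b\<in>reduced_exps m n w - {b0}. c b * ?T b) = 0"
      by (rule sum.neutral) (use other in blast)
    thus ?thesis using b0_red finite_reduced_exps by (subst sum.remove[of _ b0]) auto
  qed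
  finally have "proj_inner n u (mon_fun n (exp_complement m n b0)) \<noteq> 0"
    using c_b0 proj_mon_sum_own_complement[OF m] b0_red by (auto simp: reduced_exps_def)
  thus False using orth b0_red b0_thr by blast
qed

lemma dual_code_subset_PRM:
  fixes C :: "('a::{field,finite} list \<Rightarrow> 'a) set"
  assumes m: "m = card (UNIV::'a set) - 1" and w: "0 < w" "w < m"
    and high: "\<And>b. b \<in> reduced_exps m n w \<Longrightarrow> thr < total_degree n b
                  \<Longrightarrow> mon_fun n (exp_complement m n b) \<in> C"
    and low: "\<And>b. b \<in> reduced_exps m n w \<Longrightarrow> total_degree n b \<le> thr
                  \<Longrightarrow> (mon_fun n b :: 'a list \<Rightarrow> 'a) \<in> PRM n d"
  shows "dual_code n C \<subseteq> PRM n d"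
proof
  fix u assume u: "u \<in> dual_code n C"
  then obtain c where u_eq: "u = (\<Sum>b\<in>reduced_exps m n w. fscale (c b) (mon_fun n b))"
    using proj_funs_expansion[OF m w] dual_code_subset_proj_funs by blast
  show "u \<in> PRM n d" unfolding u_eq
  proof (rule fv.subspace_sum[OF subspace_PRM])
    fix b assume b: "b \<in> reduced_exps m n w"
    show "fscale (c b) (mon_fun n b) \<in> PRM n d"
    proof (cases "thr < total_degree n b")
      case True
      have "c b = 0"
        by (rule reduced_coeffs_vanish_above[OF m w u_eq _ b True])
          (use high proj_inner_dual_code[OF u] in blast)
      thus ?thesis using fv.subspace_0[OF subspace_PRM] by simp
    next
      case False
      thus ?thesis using low[OF b] fv.subspace_scale[OF subspace_PRM] by simp
    qed
  qed
qed

lemma nat_eq_if_mod_eq_close: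
  fixes a b m :: nat
  assumes "a mod m = b mod m" "a < b + m" "b < a + m"
  shows "a = b"
proof (rule ccontr)
  assume "a \<noteq> b"
  have "int m dvd \<bar>int a - int b\<bar>" using assms(1) by (metis mod_eq_dvd_iff of_nat_mod dvd_abs_iff)
  hence "int m \<le> \<bar>int a - int b\<bar>" using \<open>a \<noteq> b\<close> by (intro zdvd_imp_le) auto
  thus False using assms(2,3) by linarith
qed

section \<open>The hull\<close>

text \<open>\<open>\<ell> = n(q - 1) - k\<close> with \<open>q - 1 < 2\<ell> < 2(q - 1)\<close> is exactly the range of the theorem.\<close>

locale hull_setting =
  fixes n k l m :: nat and field_type :: "'a::{field,finite} itself"
  assumes m: "m = card (UNIV::'a set) - 1"
    and n_pos: "1 \<le> n" and l_lt_m: "l < m" and m_lt_2l: "m < 2 * l" and k_plus_l: "k + l = n * m"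
begin

lemma l_pos: "0 < l"
  using m_lt_2l by simp

lemma pred_n: "Suc (n - 1) = n"
  using n_pos by simp

lemma k_mod_m: "k mod m = m - l"
proof -
  have "k = (m - l) + (n - 1) * m"
    using k_plus_l l_lt_m n_pos by (cases n) auto
  hence "k mod m = (m - l) mod m" by (metis mod_mult_self1)
  thus ?thesis using l_lt_m l_pos by simp
qed

lemma proj_mon_sum_degree_k_plus_l:
  assumes "a \<in> monomials n k" "b \<in> monomials n l"
  shows "(proj_mon_sum n (\<lambda>i. b i + a i) :: 'a) = 0"
proof -
  let ?c = "\<lambda>i. b i + a i"
  have deg: "total_degree n ?c = n * m"
    using total_degree_add[of n b a] monomials_total_degree[OF assms(1)]
      monomials_total_degree[OF assms(2)] k_plus_l by simp
  have zero: "(\<Prod>i\<le>n. (power_sum (?c i) :: 'a)) = 0"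
  proof (rule ccontr)
    assume "(\<Prod>i\<le>n. (power_sum (?c i) :: 'a)) \<noteq> 0"
    from prod_power_sum_nonzero[OF this] have "m \<le> ?c i" if "i \<le> n" for i
      using m that by (auto intro: dvd_imp_le)
    hence "(\<Sum>i\<le>n. m) \<le> total_degree n ?c" unfolding total_degree_def by (intro sum_mono) auto
    thus False using deg l_lt_m by simp
  qed
  have "(proj_mon_sum n ?c :: 'a) = - (\<Prod>i\<le>n. power_sum (?c i))"
    by (rule proj_mon_sum_degree_multiple) (use deg m n_pos l_lt_m in simp_all)
  also have "\<dots> = 0" unfolding zero by simp
  finally show ?thesis .
qed

lemma PRM_k_orthogonal_PRM_l:
  assumes "u \<in> (PRM n k :: ('a list \<Rightarrow> 'a) set)" "v \<in> (PRM n l :: ('a list \<Rightarrow> 'a) set)"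
  shows "proj_inner n u v = 0"
proof -
  obtain cu where u: "u = (\<Sum>a\<in>monomials n k. fscale (cu a) (mon_fun n a))"
    using PRM_expansion[OF assms(1)] .
  obtain cv where v: "v = (\<Sum>b\<in>monomials n l. fscale (cv b) (mon_fun n b))"
    using PRM_expansion[OF assms(2)] .
  have "proj_inner n u v = (\<Sum>a\<in>monomials n k. cu a * proj_inner n (mon_fun n a) v)"
    unfolding u by (simp add: proj_inner_sum_left finite_monomials)
  also have "\<dots> = (\<Sum>a\<in>monomials n k. cu a * proj_inner n v (mon_fun n a))"
    by (intro sum.cong refl) (subst proj_inner_commute, rule refl)
  also have "\<dots> = (\<Sum>a\<in>monomials n k. cu a *
      (\<Sum>b\<in>monomials n l. cv b * proj_mon_sum n (\<lambda>i. b i + a i)))"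
    unfolding v by (simp add: proj_inner_sum_left finite_monomials proj_inner_mon_fun)
  also have "\<dots> = 0" using proj_mon_sum_degree_k_plus_l by (simp add: sum.neutral)
  finally show ?thesis .
qed

lemma dual_PRM_l_subset_PRM_k: "dual_code n (PRM n l :: ('a list \<Rightarrow> 'a) set) \<subseteq> PRM n k"
proof (rule dual_code_subset_PRM[OF m, where w="m - l" and thr=k])
  show "0 < m - l" "m - l < m" using l_lt_m l_pos by auto
next
  fix b assume b: "b \<in> reduced_exps m n (m - l)" and high: "k < total_degree n b"
  have b_le: "\<forall>i\<le>n. b i \<le> m" and b_mod: "total_degree n b mod m = m - l"
    using b by (auto simp: reduced_exps_def)
  have compl: "total_degree n (exp_complement m n b) + total_degree n b = Suc n * m"
    by (rule total_degree_exp_complement[OF b_le])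
  have "Suc n * m - l = (m - l) + n * m" using l_lt_m by simp
  hence "(Suc n * m - l) mod m = (m - l) mod m" by (metis mod_mult_self1)
  hence "(Suc n * m - l) mod m = m - l" using l_lt_m l_pos by simp
  have Suc_n_m: "Suc n * m = m + n * m" by simp
  have "total_degree n b = Suc n * m - l"
  proof (rule nat_eq_if_mod_eq_close)
    show "total_degree n b mod m = (Suc n * m - l) mod m" using b_mod \<open>(Suc n * m - l) mod m = m - l\<close> by simp
    show "total_degree n b < Suc n * m - l + m" using compl l_lt_m by linarith
    show "Suc n * m - l < total_degree n b + m" using Suc_n_m high k_plus_l by linarith
  qed
  hence "total_degree n (exp_complement m n b) = l" using compl l_lt_m Suc_n_m by linarith
  hence "exp_complement m n b \<in> monomials n l"
    unfolding monomials_def by (auto simp: total_degree_def exp_complement_def)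
  thus "(mon_fun n (exp_complement m n b) :: 'a list \<Rightarrow> 'a) \<in> PRM n l" by (rule mon_fun_in_PRM_same_degree)
next
  fix b assume b: "b \<in> reduced_exps m n (m - l)" and low: "total_degree n b \<le> k"
  have supp: "\<forall>i>n. b i = 0" and b_mod: "total_degree n b mod m = m - l"
    using b by (auto simp: reduced_exps_def)
  have pos: "0 < total_degree n b"
  proof (rule ccontr)
    assume "\<not> 0 < total_degree n b"
    hence "total_degree n b mod m = 0" by simp
    thus False using b_mod l_lt_m by simp
  qed
  have "k mod m = total_degree n b mod m" using b_mod k_mod_m by simp
  hence "m dvd k - total_degree n b" using mod_eq_dvd_iff_nat[OF low] by blast
  thus "(mon_fun n b :: 'a list \<Rightarrow> 'a) \<in> PRM n k" by (rule mon_fun_in_PRM[OF m supp pos low])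
qed

lemma dual_PRM_k_subset_PRM_l: "dual_code n (PRM n k :: ('a list \<Rightarrow> 'a) set) \<subseteq> PRM n l"
proof (rule dual_code_subset_PRM[OF m, where w=l and thr=l])
  show "0 < l" "l < m" using l_lt_m l_pos by auto
next
  fix b assume b: "b \<in> reduced_exps m n l" and high: "l < total_degree n b"
  have b_le: "\<forall>i\<le>n. b i \<le> m" and b_mod: "total_degree n b mod m = l"
    using b by (auto simp: reduced_exps_def)
  let ?d = "total_degree n (exp_complement m n b)"
  have compl: "?d + total_degree n b = Suc n * m"
    by (rule total_degree_exp_complement[OF b_le])
  define Q where "Q = total_degree n b div m"
  have Q: "total_degree n b = m * Q + l"
    unfolding Q_def using div_mult_mod_eq[of "total_degree n b" m] b_mod by (simp add: mult.commute)
  have "Q \<ge> 1" using Q high by (cases Q) auto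
  hence mQ: "m * Q = m + m * (Q - 1)" by (cases Q) auto
  have "Suc n * m = m + n * m" by simp
  hence d_eq: "?d + m * (Q - 1) = k" using compl Q mQ k_plus_l by linarith
  have pos: "0 < ?d"
  proof (rule ccontr)
    assume "\<not> 0 < ?d"
    hence "total_degree n b mod m = 0" using compl by simp
    thus False using b_mod l_pos by simp
  qed
  have le: "?d \<le> k" using d_eq by linarith
  have "k - ?d = m * (Q - 1)" using d_eq by linarith
  hence dvd: "m dvd k - ?d" by simp
  have supp: "\<forall>i>n. exp_complement m n b i = 0" by (simp add: exp_complement_def)
  show "(mon_fun n (exp_complement m n b) :: 'a list \<Rightarrow> 'a) \<in> PRM n k"
    by (rule mon_fun_in_PRM[OF m supp pos le dvd])
next
  fix b assume b: "b \<in> reduced_exps m n l" and low: "total_degree n b \<le> l"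
  have b_mod: "total_degree n b mod m = l mod m" and supp: "\<forall>i>n. b i = 0"
    using b l_lt_m by (auto simp: reduced_exps_def)
  have "total_degree n b = l"
    by (rule nat_eq_if_mod_eq_close[OF b_mod]) (use low l_lt_m in linarith)+
  hence "b \<in> monomials n l" using supp by (simp add: monomials_def total_degree_def)
  thus "(mon_fun n b :: 'a list \<Rightarrow> 'a) \<in> PRM n l" by (rule mon_fun_in_PRM_same_degree)
qed

definition pair_exps :: "nat \<Rightarrow> nat \<Rightarrow> nat" where
  "pair_exps t = tail_exps n t (l - t)"

definition hull_excluded :: "(nat \<Rightarrow> nat) set" where
  "hull_excluded = pair_exps ` {..2 * l - m}"

definition hull_exps :: "(nat \<Rightarrow> nat) set" where
  "hull_exps = monomials n l - hull_excluded"

lemma pair_exps_in_monomials: "t \<le> l \<Longrightarrow> pair_exps t \<in> monomials n l"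
  using total_degree_tail_exps[OF pred_n, of t "l - t"]
  by (auto simp: monomials_def pair_exps_def total_degree_def tail_exps_def)

lemma inj_pair_exps: "inj pair_exps"
  by (rule injI) (metis pair_exps_def tail_exps_at(2)[OF pred_n])

lemma hull_excluded_subset_monomials: "hull_excluded \<subseteq> monomials n l"
  using pair_exps_in_monomials l_lt_m by (auto simp: hull_excluded_def)

lemma card_hull_excluded: "card hull_excluded = 2 * l - m + 1"
  unfolding hull_excluded_def by (simp add: card_image inj_on_subset[OF inj_pair_exps])

lemma proj_mon_sum_degree_2l:
  assumes "a \<in> monomials n l" "b \<in> monomials n l"
  shows "(proj_mon_sum n (\<lambda>i. a i + b i) :: 'a)
           = (if (\<lambda>i. a i + b i) = tail_exps n 0 (2 * l) then 1 else 0)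
             - (if (\<lambda>i. a i + b i) = tail_exps n (2 * l - m) m then 1 else 0)"
proof (rule proj_mon_sum_degree_between[OF m])
  show "m < 2 * l" "2 * l < 2 * m" using m_lt_2l l_lt_m by simp_all
  show "\<forall>i>n. a i + b i = 0" using assms by (simp add: monomials_def)
  show "total_degree n (\<lambda>i. a i + b i) = 2 * l"
    using total_degree_add[of n a b] monomials_total_degree[OF assms(1)]
      monomials_total_degree[OF assms(2)] by simp
qed

lemma excluded_if_add_eq_tail_exps:
  assumes a: "a \<in> monomials n l" and sum: "(\<lambda>i. a i + b i) = tail_exps n x y" and x: "x \<le> 2 * l - m"
  shows "a \<in> hull_excluded"
proof -
  obtain j where j: "Suc j = n" using n_pos by (cases n) auto
  have at: "a i + b i = tail_exps n x y i" for i using fun_cong[OF sum] by simp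
  have "a i = 0" if "i \<noteq> j" "i \<noteq> n" for i
    using at[of i] that j by (auto simp: tail_exps_at)
  hence a_eq: "a = tail_exps n (a j) (a n)" by (intro eq_tail_expsI[OF j]) auto
  have "a j + a n = l"
    using monomials_total_degree[OF a] total_degree_tail_exps[OF j] a_eq by metis
  hence "l - a j = a n" by simp
  hence "a = pair_exps (a j)" unfolding pair_exps_def using a_eq by simp
  moreover have "a j \<le> 2 * l - m"
    using at[of j] x j by (simp add: tail_exps_at)
  ultimately show ?thesis unfolding hull_excluded_def by blast
qed

lemma proj_mon_sum_hull_exps:
  assumes "a \<in> hull_exps" "b \<in> monomials n l"
  shows "(proj_mon_sum n (\<lambda>i. a i + b i) :: 'a) = 0"
proof -
  have a: "a \<in> monomials n l" "a \<notin> hull_excluded" using assms(1) by (auto simp: hull_exps_def)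
  have "(\<lambda>i. a i + b i) \<noteq> tail_exps n x y" if "x \<le> 2 * l - m" for x y
    using excluded_if_add_eq_tail_exps[OF a(1) _ that] a(2) by blast
  thus ?thesis using proj_mon_sum_degree_2l[OF a(1) assms(2)] by simp
qed

lemma add_pair_exps_eq_iff:
  assumes s: "s \<le> 2 * l - m"
  shows "(\<lambda>i. a i + pair_exps s i) = tail_exps n 0 (2 * l) \<longleftrightarrow> s = 0 \<and> a = pair_exps 0"
    and "(\<lambda>i. a i + pair_exps s i) = tail_exps n (2 * l - m) m \<longleftrightarrow> a = pair_exps (2 * l - m - s)"
proof -
  show "(\<lambda>i. a i + pair_exps s i) = tail_exps n 0 (2 * l) \<longleftrightarrow> s = 0 \<and> a = pair_exps 0"
    unfolding pair_exps_def add_eq_tail_exps_iff[OF pred_n] by auto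
  have "m - (l - s) = l - (2 * l - m - s)" "l - s \<le> m" using s l_lt_m m_lt_2l by auto
  thus "(\<lambda>i. a i + pair_exps s i) = tail_exps n (2 * l - m) m \<longleftrightarrow> a = pair_exps (2 * l - m - s)"
    unfolding pair_exps_def add_eq_tail_exps_iff[OF pred_n] using s by auto
qed

lemma proj_inner_pair_exps:
  assumes s: "s \<le> 2 * l - m"
  shows "proj_inner n (\<Sum>a\<in>monomials n l. fscale (c a) (mon_fun n a)) (mon_fun n (pair_exps s) :: 'a list \<Rightarrow> 'a)
       = (if s = 0 then c (pair_exps 0) else 0) - c (pair_exps (2 * l - m - s))"
proof -
  have in_mon: "pair_exps t \<in> monomials n l" if "t \<le> 2 * l - m" for t
    using pair_exps_in_monomials that l_lt_m by simp
  have "proj_inner n (\<Sum>a\<in>monomials n l. fscale (c a) (mon_fun n a)) (mon_fun n (pair_exps s) :: 'a list \<Rightarrow> 'a)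
      = (\<Sum>a\<in>monomials n l. c a * proj_mon_sum n (\<lambda>i. a i + pair_exps s i))"
    by (simp add: proj_inner_sum_left finite_monomials proj_inner_mon_fun)
  also have "\<dots> = (\<Sum>a\<in>monomials n l. (if s = 0 \<and> a = pair_exps 0 then c a else 0)
                                        - (if a = pair_exps (2 * l - m - s) then c a else 0))"
  proof (intro sum.cong refl)
    fix a assume a: "a \<in> monomials n l"
    have "(proj_mon_sum n (\<lambda>i. a i + pair_exps s i) :: 'a)
        = (if s = 0 \<and> a = pair_exps 0 then 1 else 0) - (if a = pair_exps (2 * l - m - s) then 1 else 0)"
      using proj_mon_sum_degree_2l[OF a in_mon[OF s]] unfolding add_pair_exps_eq_iff[OF s] .
    thus "c a * (proj_mon_sum n (\<lambda>i. a i + pair_exps s i) :: 'a)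
        = (if s = 0 \<and> a = pair_exps 0 then c a else 0) - (if a = pair_exps (2 * l - m - s) then c a else 0)"
      by (simp only: if_distrib[of "(*) (c a)"] right_diff_distrib mult_1_right mult_zero_right)
  qed
  also have "\<dots> = (if s = 0 then c (pair_exps 0) else 0) - c (pair_exps (2 * l - m - s))"
    using in_mon[of 0] in_mon[of "2 * l - m - s"] finite_monomials by (simp add: sum_subtractf sum.delta)
  finally show ?thesis .
qed

lemma coeffs_hull_excluded_eq_0:
  assumes orth: "\<And>a'. a' \<in> monomials n l \<Longrightarrow>
      proj_inner n (\<Sum>a\<in>monomials n l. fscale (c a) (mon_fun n a)) (mon_fun n a' :: 'a list \<Rightarrow> 'a) = 0"
  shows "a \<in> hull_excluded \<Longrightarrow> c a = 0"
proof -
  have key: "(if s = 0 then c (pair_exps 0) else 0) = c (pair_exps (2 * l - m - s))" if "s \<le> 2 * l - m" for s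
    using proj_inner_pair_exps[OF that, of c] orth[OF pair_exps_in_monomials] that l_lt_m by simp
  \<comment> \<open>\<open>s \<mapsto> 2\<ell> - m - s\<close> kills all coefficients but \<open>c (pair_exps 0)\<close>, which \<open>s = 2\<ell> - m > 0\<close> then kills\<close>
  have below: "c (pair_exps t) = 0" if "t < 2 * l - m" for t
  proof -
    have "2 * l - m - (2 * l - m - t) = t" "2 * l - m - t \<noteq> 0" using that by simp_all
    thus ?thesis using key[of "2 * l - m - t"] by simp
  qed
  have "c (pair_exps (2 * l - m)) = 0"
    using key[of 0] below[of 0] m_lt_2l by simp
  hence "c (pair_exps t) = 0" if "t \<le> 2 * l - m" for t
    using below[of t] that by (cases "t = 2 * l - m") auto
  thus "a \<in> hull_excluded \<Longrightarrow> c a = 0" by (auto simp: hull_excluded_def)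
qed

lemma hull_subset_span_hull_exps:
  "hull_code n (PRM n k :: ('a list \<Rightarrow> 'a) set) \<subseteq> fv.span (mon_fun n ` hull_exps)"
proof
  fix u :: "'a list \<Rightarrow> 'a" assume u: "u \<in> hull_code n (PRM n k)"
  have u_k: "u \<in> PRM n k" and "u \<in> dual_code n (PRM n k)" using u by (auto simp: hull_code_def)
  hence "u \<in> PRM n l" using dual_PRM_k_subset_PRM_l by blast
  then obtain c where u_eq: "u = (\<Sum>a\<in>monomials n l. fscale (c a) (mon_fun n a))"
    by (rule PRM_expansion)
  have "c a = 0" if "a \<in> hull_excluded" for a
  proof (rule coeffs_hull_excluded_eq_0[OF _ that])
    fix a' assume "a' \<in> monomials n l"
    thus "proj_inner n (\<Sum>a\<in>monomials n l. fscale (c a) (mon_fun n a)) (mon_fun n a') = 0"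
      using PRM_k_orthogonal_PRM_l[OF u_k mon_fun_in_PRM_same_degree] u_eq by simp
  qed
  hence "(\<Sum>a\<in>hull_excluded. fscale (c a) (mon_fun n a)) = (0 :: 'a list \<Rightarrow> 'a)"
    by (intro sum.neutral) simp
  hence "u = (\<Sum>a\<in>hull_exps. fscale (c a) (mon_fun n a))"
    unfolding u_eq hull_exps_def using hull_excluded_subset_monomials finite_monomials
    by (subst sum.subset_diff[of hull_excluded]) auto
  also have "\<dots> \<in> fv.span (mon_fun n ` hull_exps)"
    by (intro fv.span_sum fv.span_scale fv.span_base) auto
  finally show "u \<in> fv.span (mon_fun n ` hull_exps)" .
qed

lemma mon_fun_hull_exps_in_hull:
  assumes a: "a \<in> hull_exps"
  shows "(mon_fun n a :: 'a list \<Rightarrow> 'a) \<in> hull_code n (PRM n k)"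
proof -
  have a_mon: "a \<in> monomials n l" using a by (simp add: hull_exps_def)
  have v_l: "(mon_fun n a :: 'a list \<Rightarrow> 'a) \<in> PRM n l" by (rule mon_fun_in_PRM_same_degree[OF a_mon])
  have "mon_fun n a \<in> dual_code n (PRM n l :: ('a list \<Rightarrow> 'a) set)"
  proof (rule in_dual_codeI[OF mon_fun_in_proj_funs])
    fix w :: "'a list \<Rightarrow> 'a" assume "w \<in> PRM n l"
    then obtain cw where w: "w = (\<Sum>b\<in>monomials n l. fscale (cw b) (mon_fun n b))"
      by (rule PRM_expansion)
    have "proj_inner n (mon_fun n a) w = proj_inner n w (mon_fun n a)" by (rule proj_inner_commute)
    also have "\<dots> = (\<Sum>b\<in>monomials n l. cw b * proj_mon_sum n (\<lambda>i. b i + a i))"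
      unfolding w by (simp add: proj_inner_sum_left finite_monomials proj_inner_mon_fun)
    also have "\<dots> = 0" using proj_mon_sum_hull_exps[OF a] by (simp add: add.commute)
    finally show "proj_inner n (mon_fun n a) w = 0" .
  qed
  hence v_k: "mon_fun n a \<in> (PRM n k :: ('a list \<Rightarrow> 'a) set)" using dual_PRM_l_subset_PRM_k by blast
  have "mon_fun n a \<in> dual_code n (PRM n k :: ('a list \<Rightarrow> 'a) set)"
    using in_dual_codeI[OF mon_fun_in_proj_funs] PRM_k_orthogonal_PRM_l[OF _ v_l]
    by (metis proj_inner_commute)
  thus ?thesis using v_k by (simp add: hull_code_def)
qed

lemma hull_eq_span_hull_exps: "hull_code n (PRM n k :: ('a list \<Rightarrow> 'a) set) = fv.span (mon_fun n ` hull_exps)"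
proof
  have "fv.subspace (hull_code n (PRM n k :: ('a list \<Rightarrow> 'a) set))"
    unfolding hull_code_def by (intro fv.subspace_inter subspace_PRM subspace_dual_code)
  thus "fv.span (mon_fun n ` hull_exps) \<subseteq> hull_code n (PRM n k :: ('a list \<Rightarrow> 'a) set)"
    using mon_fun_hull_exps_in_hull by (intro fv.span_minimal) auto
qed (rule hull_subset_span_hull_exps)

lemma monomials_subset_reduced_exps: "monomials n l \<subseteq> reduced_exps m n l"
proof
  fix a assume a: "a \<in> monomials n l"
  have "\<forall>i\<le>n. a i \<le> m" using monomials_le[OF a] l_lt_m by (meson le_trans less_imp_le)
  thus "a \<in> reduced_exps m n l"
    using a monomials_total_degree[OF a] l_lt_m by (simp add: reduced_exps_def monomials_def)
qed

lemma code_dim_span_mon_fun: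
  assumes "B \<subseteq> monomials n l"
  shows "code_dim (fv.span (mon_fun n ` B) :: ('a list \<Rightarrow> 'a) set) = card B"
proof -
  have B: "B \<subseteq> reduced_exps m n l" using assms monomials_subset_reduced_exps by blast
  show ?thesis unfolding code_dim_def
    using independent_mon_fun_reduced[OF m l_pos l_lt_m B] inj_on_mon_fun_reduced[OF m l_pos l_lt_m B]
    by (simp add: fv.dim_span fv.dim_eq_card_independent card_image)
qed

lemma code_dim_PRM_l: "code_dim (PRM n l :: ('a list \<Rightarrow> 'a) set) = (n + l) choose l"
  unfolding PRM_eq_span by (simp add: code_dim_span_mon_fun card_monomials)

lemma code_dim_hull: "code_dim (hull_code n (PRM n k :: ('a list \<Rightarrow> 'a) set)) = ((n + l) choose l) - (2 * l - m + 1)"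
proof -
  have "card hull_exps = card (monomials n l) - card hull_excluded"
    unfolding hull_exps_def by (rule card_Diff_subset[OF finite_subset[OF hull_excluded_subset_monomials
          finite_monomials] hull_excluded_subset_monomials])
  thus ?thesis unfolding hull_eq_span_hull_exps
    by (simp add: code_dim_span_mon_fun hull_exps_def card_hull_excluded card_monomials)
qed

lemma card_hull_excluded_le: "2 * l - m + 1 \<le> (n + l) choose l"
  using card_mono[OF finite_monomials hull_excluded_subset_monomials] card_hull_excluded card_monomials by simp

end

lemma hull_range_of_bounds:
  fixes n k q :: nat
  assumes "1 \<le> q" "1 \<le> n"
    and "real ((n - 1) * (q - 1)) < real k"
    and "real k < real (n * (q - 1)) - (real q - 1) / 2"
  shows "n * (q - 1) - k < q - 1" "q - 1 < 2 * (n * (q - 1) - k)" "k + (n * (q - 1) - k) = n * (q - 1)"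
proof -
  obtain m where m: "m = q - 1" by simp
  have lower: "(n - 1) * m < k" using assms(3) m by (simp only: of_nat_less_iff)
  have rq: "real q - 1 = real m" using assms(1) m by (simp add: of_nat_diff)
  have "real k < real (n * m) - real m / 2" using assms(4) unfolding rq m[symmetric] .
  hence "2 * real k + real m < 2 * real (n * m)" by linarith
  hence "real (2 * k + m) < real (2 * (n * m))" by simp
  hence upper: "2 * k + m < 2 * (n * m)" by (simp only: of_nat_less_iff)
  have split: "n * m = (n - 1) * m + m" using assms(2) by (cases n) auto
  show "n * (q - 1) - k < q - 1" using split lower upper unfolding m[symmetric] by linarith
  show "q - 1 < 2 * (n * (q - 1) - k)" using upper unfolding m[symmetric] by linarith
  show "k + (n * (q - 1) - k) = n * (q - 1)" using upper unfolding m[symmetric] by linarith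
qed

theorem mainTheorem11:
  fixes n k :: nat
  defines "q \<equiv> card (UNIV :: 'a::{field,finite} set)"
  defines "l \<equiv> n * (q - 1) - k"
  assumes "n \<ge> 1"
    and "real ((n - 1) * (q - 1)) < real k"
    and "real k < real (n * (q - 1)) - (real q - 1) / 2"
  shows "int (code_dim (hull_code n (PRM n k :: ('a list \<Rightarrow> 'a) set)))
           = int (code_dim (PRM n l :: ('a list \<Rightarrow> 'a) set)) - (2 * int l + 1 - (int q - 1))
       \<and> int (code_dim (PRM n l :: ('a list \<Rightarrow> 'a) set)) - (2 * int l + 1 - (int q - 1))
           = int ((n + l) choose l) - (2 * int l + 1 - (int q - 1))"
proof -
  have "1 \<le> q" using card_UNIV_field_ge_2[where 'a='a] unfolding q_def by simp
  interpret hull_setting n k l "q - 1" "TYPE('a)"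
    using hull_range_of_bounds[OF \<open>1 \<le> q\<close> assms(3-5)] assms(3) unfolding l_def q_def
    by unfold_locales simp_all
  have "int (code_dim (hull_code n (PRM n k :: ('a list \<Rightarrow> 'a) set)))
      = int ((n + l) choose l) - int (2 * l - (q - 1) + 1)"
    unfolding code_dim_hull using card_hull_excluded_le by (rule of_nat_diff)
  moreover have "int (2 * l - (q - 1) + 1) = 2 * int l + 1 - (int q - 1)"
    using m_lt_2l \<open>1 \<le> q\<close> by linarith
  ultimately show ?thesis using code_dim_PRM_l by simp
qed

end
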